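(* Let $N\in(\mathbb{N}^* )^m$, $I\subseteq\{1,\dots,m\}$, and let $A\subseteq F_I(\Gamma^m)$ be a non-closed monohedral largely continuous precell mod $N$. Then for every integer $n\geq1$ there exist $N'\in(\mathbb{N}^* )^m$ and a partition $(A_i)_{1\leq i\leq n}$ of $A$ into largely continuous precells mod $N'$ such that $\partial A_i=\partial A$ for $1\leq i\leq n$.
   Context: $\mathcal{Z}$ is a $\mathbb{Z}$-group (linearly ordered abelian group with smallest positive element $1$, $|\mathcal{Z}/n\mathcal{Z}|=n$ for all $n\geq1$), $\mathcal{Q}$ its divisible hull, $\Gamma=\mathcal{Z}\cup\{+\infty\}$, $\Omega=\mathcal{Q}\cup\{+\infty\}$, $+\infty$ maximal and absorbing for $+$. Topology on $\Omega$ generated by open intervals and $]a,+\infty]$; product topology on $\Omega^m$; $\overline A$ closure; $A$ closed iff $A=\overline A$; frontier $\partial A$ = closure of $\overline A\setminus A$. $F_K(\Gamma^m)$: points whose non-$+\infty$ coordinates are exactly those in $K$; $F_K(A)=\overline A\cap F_K(\Gamma^m)$, a face when non-empty; $A$ is monohedral if its faces are linearly ordered by $B\leq C$ iff $B\subseteq\overline C$. Socle $\widehat a=(a_1,\dots,a_{m-1})$, $\widehat A$, $\widehat N$. Congruence: $a\equiv b\,[n]$ iff $a-b\in n\mathcal{Z}$, and $a\equiv+\infty\,[n]$ always. For $Y\subseteq F_K(\Gamma^k)$, $g:Y\to\Omega$ is affine if constantly $+\infty$ or $g(y)=\alpha_0+\sum_{i\in K}\alpha_iy_i$ ($\alpha_0\in\mathcal{Q}$,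 $\alpha_i\in\mathbb{Q}$); largely continuous if it extends continuously to $\overline Y$. Largely continuous precells mod $N$: $\Gamma^0$ for $m=0$; for $m\geq1$, $A\subseteq F_I(\Gamma^m)$ such that $\widehat A$ is a largely continuous precell mod $\widehat N$ and for some non-negative largely continuous affine $\mu,\nu:\widehat A\to\Omega$ and integer $0\leq\rho<N_m$, $A=\{a\in F_I(\Gamma^m):\widehat a\in\widehat A,\ \mu(\widehat a)\leq a_m\leq\nu(\widehat a),\ a_m\equiv\rho\,[N_m]\}$. *)

theory Defs
  imports Main "HOL.Rat"
begin

text \<open>A Z-group is represented as an additive subgroup Z of a linearly ordered
field 'k whose smallest positive element is the field's 1 and with |Z/nZ| = n.\<close>

definition nmult :: "'k::linordered_field set \<Rightarrow> nat \<Rightarrow> 'k set" where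
  "nmult Z n = {of_nat n * z | z. z \<in> Z}"

definition Zgroup :: "'k::linordered_field set \<Rightarrow> bool" where
  "Zgroup Z \<longleftrightarrow> 0 \<in> Z \<and> (\<forall>x\<in>Z. \<forall>y\<in>Z. x + y \<in> Z \<and> - x \<in> Z)
     \<and> 1 \<in> Z \<and> (\<forall>z\<in>Z. 0 < z \<longrightarrow> 1 \<le> z)
     \<and> (\<forall>n::nat. n \<ge> 1 \<longrightarrow>
          card (Z // {(x, y). x \<in> Z \<and> y \<in> Z \<and> x - y \<in> nmult Z n}) = n)"

definition divhull :: "'k::linordered_field set \<Rightarrow> 'k set" where
  "divhull Z = {q. \<exists>n::nat. n \<ge> 1 \<and> of_nat n * q \<in> Z}"

datatype 'a ext = Fin 'a | PInf

instantiation ext :: (linorder) linorder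
begin
fun less_eq_ext :: "'a ext \<Rightarrow> 'a ext \<Rightarrow> bool" where
  "less_eq_ext (Fin a) (Fin b) = (a \<le> b)"
| "less_eq_ext _ PInf = True"
| "less_eq_ext PInf (Fin _) = False"
definition less_ext :: "'a ext \<Rightarrow> 'a ext \<Rightarrow> bool" where
  "less_ext x y = (x \<le> y \<and> \<not> y \<le> x)"
instance
proof
  fix x y z :: "'a ext"
  show "(x < y) = (x \<le> y \<and> \<not> y \<le> x)" by (simp add: less_ext_def)
  show "x \<le> x" by (cases x) auto
  show "x \<le> y \<Longrightarrow> y \<le> z \<Longrightarrow> x \<le> z"
    by (cases x; cases y; cases z) auto
  show "x \<le> y \<Longrightarrow> y \<le> x \<Longrightarrow> x = y"
    by (cases x; cases y) auto
  show "x \<le> y \<or> y \<le> x" by (cases x; cases y) auto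
qed
end

fun fin_val :: "'a::zero ext \<Rightarrow> 'a" where
  "fin_val (Fin a) = a"
| "fin_val PInf = 0"

text \<open>Gamma = Z with +infinity, Omega = Q with +infinity.\<close>
definition gam :: "'k::linordered_field set \<Rightarrow> 'k ext set" where
  "gam Z = Fin ` Z \<union> {PInf}"

definition omg :: "'k::linordered_field set \<Rightarrow> 'k ext set" where
  "omg Z = Fin ` divhull Z \<union> {PInf}"

fun cong_ext :: "'k::linordered_field set \<Rightarrow> nat \<Rightarrow> 'k ext \<Rightarrow> 'k ext \<Rightarrow> bool" where
  "cong_ext Z n (Fin a) (Fin b) = (a - b \<in> nmult Z n)"
| "cong_ext Z n _ _ = True"

definition basic_open :: "'k::linordered_field set \<Rightarrow> 'k ext set \<Rightarrow> bool" where
  "basic_open Z S \<longleftrightarrow>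
     (\<exists>a\<in>omg Z. \<exists>b\<in>omg Z. S = {y \<in> omg Z. a < y \<and> y < b})
   \<or> (\<exists>a\<in>omg Z. S = {y \<in> omg Z. a < y})"

definition basic_nbhd :: "'k::linordered_field set \<Rightarrow> nat \<Rightarrow> 'k ext list \<Rightarrow> 'k ext set list \<Rightarrow> bool" where
  "basic_nbhd Z m x Ss \<longleftrightarrow> length Ss = m \<and> (\<forall>i<m. basic_open Z (Ss ! i) \<and> x ! i \<in> Ss ! i)"

definition clos :: "'k::linordered_field set \<Rightarrow> nat \<Rightarrow> 'k ext list set \<Rightarrow> 'k ext list set" where
  "clos Z m A = {x. length x = m \<and> set x \<subseteq> omg Z \<and>
     (\<forall>Ss. basic_nbhd Z m x Ss \<longrightarrow> (\<exists>a\<in>A. \<forall>i<m. a ! i \<in> Ss ! i))}"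

definition is_closed :: "'k::linordered_field set \<Rightarrow> nat \<Rightarrow> 'k ext list set \<Rightarrow> bool" where
  "is_closed Z m A \<longleftrightarrow> A = clos Z m A"

definition frontier_set :: "'k::linordered_field set \<Rightarrow> nat \<Rightarrow> 'k ext list set \<Rightarrow> 'k ext list set" where
  "frontier_set Z m A = clos Z m (clos Z m A - A)"

text \<open>F_K(Gamma^m); indices are 0..m-1 instead of 1..m.\<close>
definition Fgam :: "'k::linordered_field set \<Rightarrow> nat \<Rightarrow> nat set \<Rightarrow> 'k ext list set" where
  "Fgam Z m K = {a. length a = m \<and> set a \<subseteq> gam Z \<and> {i. i < m \<and> a ! i \<noteq> PInf} = K}"

definition Fface :: "'k::linordered_field set \<Rightarrow> nat \<Rightarrow> nat set \<Rightarrow> 'k ext list set \<Rightarrow> 'k ext list set" where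
  "Fface Z m K A = clos Z m A \<inter> Fgam Z m K"

definition faces :: "'k::linordered_field set \<Rightarrow> nat \<Rightarrow> 'k ext list set \<Rightarrow> 'k ext list set set" where
  "faces Z m A = {F. \<exists>K. K \<subseteq> {0..<m} \<and> F = Fface Z m K A \<and> F \<noteq> {}}"

definition monohedral :: "'k::linordered_field set \<Rightarrow> nat \<Rightarrow> 'k ext list set \<Rightarrow> bool" where
  "monohedral Z m A \<longleftrightarrow>
     linear_order_on (faces Z m A)
       {(B, C). B \<in> faces Z m A \<and> C \<in> faces Z m A \<and> B \<subseteq> clos Z m C}"

definition affine_on :: "'k::linordered_field set \<Rightarrow> nat set \<Rightarrow> 'k ext list set \<Rightarrow> ('k ext list \<Rightarrow> 'k ext) \<Rightarrow> bool" where
  "affine_on Z K Y g \<longleftrightarrow>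
     (\<forall>y\<in>Y. g y = PInf)
   \<or> (\<exists>\<alpha>0 \<in> divhull Z. \<exists>\<alpha> :: nat \<Rightarrow> rat.
        \<forall>y\<in>Y. g y = Fin (\<alpha>0 + (\<Sum>i\<in>K. of_rat (\<alpha> i) * fin_val (y ! i))))"

definition largely_cont :: "'k::linordered_field set \<Rightarrow> nat \<Rightarrow> 'k ext list set \<Rightarrow> ('k ext list \<Rightarrow> 'k ext) \<Rightarrow> bool" where
  "largely_cont Z k Y g \<longleftrightarrow>
     (\<exists>G. (\<forall>y\<in>Y. G y = g y) \<and> (\<forall>x\<in>clos Z k Y. G x \<in> omg Z) \<and>
        (\<forall>x\<in>clos Z k Y. \<forall>S. basic_open Z S \<and> G x \<in> S \<longrightarrow>
           (\<exists>Ss. basic_nbhd Z k x Ss \<and>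
              (\<forall>y\<in>clos Z k Y. (\<forall>i<k. y ! i \<in> Ss ! i) \<longrightarrow> G y \<in> S))))"

fun lcp_rev :: "'k::linordered_field set \<Rightarrow> nat list \<Rightarrow> 'k ext list set \<Rightarrow> bool" where
  "lcp_rev Z [] A = (A = {[]})"
| "lcp_rev Z (n # Ns) A =
    (\<exists>I. I \<subseteq> {0..<Suc (length Ns)} \<and> A \<subseteq> Fgam Z (Suc (length Ns)) I \<and>
       lcp_rev Z Ns (butlast ` A) \<and>
       (\<exists>\<mu> \<nu> (\<rho>::nat).
          affine_on Z {i \<in> I. i < length Ns} (butlast ` A) \<mu> \<and>
          affine_on Z {i \<in> I. i < length Ns} (butlast ` A) \<nu> \<and>
          largely_cont Z (length Ns) (butlast ` A) \<mu> \<and>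
          largely_cont Z (length Ns) (butlast ` A) \<nu> \<and>
          (\<forall>y\<in>butlast ` A. Fin 0 \<le> \<mu> y \<and> Fin 0 \<le> \<nu> y) \<and>
          \<rho> < n \<and>
          A = {a \<in> Fgam Z (Suc (length Ns)) I. butlast a \<in> butlast ` A \<and>
                 \<mu> (butlast a) \<le> a ! length Ns \<and> a ! length Ns \<le> \<nu> (butlast a) \<and>
                 cong_ext Z n (a ! length Ns) (Fin (of_nat \<rho>))}))"

definition lc_precell :: "'k::linordered_field set \<Rightarrow> nat list \<Rightarrow> 'k ext list set \<Rightarrow> bool" where
  "lc_precell Z N A = lcp_rev Z (rev N) A"

end

theory Submission
  imports Defs
begin

text \<open>
  Let \<open>F = F\<^sub>K(A)\<close> be the largest face of \<open>A\<close> other than \<open>A = F\<^sub>I(A)\<close>; it exists because the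
  faces form a finite chain and \<open>A\<close> is not closed, and it contains \<open>\<overline>A \<setminus> A\<close> in its closure,
  so \<open>\<partial>A = \<overline>F\<close>. Let \<open>j\<close> be the least index in \<open>I \<setminus> K\<close>. A point \<open>b \<in> F\<close> is approximated by
  points of \<open>A\<close> agreeing with \<open>b\<close> on the finite coordinates and with arbitrarily large \<open>j\<close>-th
  coordinate; hence the upper bound \<open>\<nu>\<close> of \<open>A\<close> in direction \<open>j\<close> is \<open>+\<infinity>\<close>. Refining the
  congruence \<open>a\<^sub>j \<equiv> \<rho> [N\<^sub>j]\<close> into the \<open>n\<close> congruences \<open>a\<^sub>j \<equiv> \<rho> + s N\<^sub>j [n N\<^sub>j]\<close> splits \<open>A\<close>
  into \<open>n\<close> precells mod \<open>N[j := n N\<^sub>j]\<close>. Each of them still has unbounded \<open>j\<close>-fibres, and an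
  induction over the coordinates after \<open>j\<close> (using that affine functions with rational
  coefficients on \<open>\<Gamma>\<close> are locally constant or locally large near a limit point) shows that
  \<open>F\<close> lies in the closure of each piece. Since each piece misses \<open>F\<close>, its frontier is \<open>\<overline>F = \<partial>A\<close>.
\<close>

lemma ext_order_simps[simp]:
  "(Fin a < Fin b) \<longleftrightarrow> a < b" "Fin a < PInf" "\<not> PInf < x" "x \<le> PInf"
  "\<not> PInf \<le> Fin b" "(Fin a \<le> Fin b) \<longleftrightarrow> a \<le> b"
  by (cases x; auto simp: less_ext_def)+

section \<open>Arithmetic in a Z-group\<close>

locale z_group =
  fixes Z :: "'k::linordered_field set"
  assumes Zgroup: "Zgroup Z"
begin

lemma Z_zero: "0 \<in> Z" and Z_one: "1 \<in> Z"
  and Z_add: "x \<in> Z \<Longrightarrow> y \<in> Z \<Longrightarrow> x + y \<in> Z"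
  and Z_uminus: "x \<in> Z \<Longrightarrow> - x \<in> Z"
  and Z_pos_ge_one: "z \<in> Z \<Longrightarrow> 0 < z \<Longrightarrow> 1 \<le> z"
  using Zgroup by (simp_all add: Zgroup_def)

lemma Z_diff: "x \<in> Z \<Longrightarrow> y \<in> Z \<Longrightarrow> x - y \<in> Z"
  using Z_add[of x "-y"] Z_uminus[of y] by simp

lemma Z_nonzero_abs_ge_one: "z \<in> Z \<Longrightarrow> z \<noteq> 0 \<Longrightarrow> 1 \<le> \<bar>z\<bar>"
  using Z_pos_ge_one[of z] Z_pos_ge_one[OF Z_uminus, of z] by (cases "0 < z") (auto simp: abs_if)

lemma Z_abs_less_one: "z \<in> Z \<Longrightarrow> \<bar>z\<bar> < 1 \<Longrightarrow> z = 0"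
  using Z_nonzero_abs_ge_one by (meson not_le)

lemma Z_of_nat_mult: "z \<in> Z \<Longrightarrow> of_nat n * z \<in> Z"
  by (induction n) (auto simp: Z_zero distrib_right intro: Z_add)

lemma Z_of_int_mult: "z \<in> Z \<Longrightarrow> of_int c * z \<in> Z"
  using Z_of_nat_mult[of z "nat c"] Z_uminus[OF Z_of_nat_mult, of z "nat (- c)"]
  by (cases "c \<ge> 0") auto

lemma Z_of_nat: "of_nat c \<in> Z"
  using Z_of_nat_mult[OF Z_one, of c] by simp

lemma Z_sum: "finite S \<Longrightarrow> (\<And>i. i \<in> S \<Longrightarrow> f i \<in> Z) \<Longrightarrow> sum f S \<in> Z"
  by (induction S rule: finite_induct) (auto simp: Z_zero intro: Z_add)

lemma nmult_iff: "x \<in> nmult Z n \<longleftrightarrow> (\<exists>z\<in>Z. x = of_nat n * z)"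
  unfolding nmult_def by auto

lemma nmult_add: "x \<in> nmult Z n \<Longrightarrow> y \<in> nmult Z n \<Longrightarrow> x + y \<in> nmult Z n"
  unfolding nmult_iff using Z_add by (auto simp flip: distrib_left)

lemma Z_divhull: "z \<in> Z \<Longrightarrow> z \<in> divhull Z"
  unfolding divhull_def by (auto intro!: exI[of _ "1::nat"])

lemma divhull_add: "x \<in> divhull Z \<Longrightarrow> y \<in> divhull Z \<Longrightarrow> x + y \<in> divhull Z"
proof -
  assume "x \<in> divhull Z" "y \<in> divhull Z"
  then obtain a b :: nat where a: "a \<ge> 1" "of_nat a * x \<in> Z" and b: "b \<ge> 1" "of_nat b * y \<in> Z"
    unfolding divhull_def by auto
  have "of_nat (a * b) * (x + y) = of_nat b * (of_nat a * x) + of_nat a * (of_nat b * y)"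
    by (simp add: algebra_simps)
  then have "of_nat (a * b) * (x + y) \<in> Z"
    using Z_add[OF Z_of_nat_mult[OF a(2)] Z_of_nat_mult[OF b(2)]] by simp
  moreover have "a * b \<ge> 1" using a b by (simp add: Suc_le_eq)
  ultimately show ?thesis unfolding divhull_def by blast
qed

lemma divhull_uminus: "x \<in> divhull Z \<Longrightarrow> - x \<in> divhull Z"
proof -
  assume "x \<in> divhull Z"
  then obtain a :: nat where "a \<ge> 1" "of_nat a * x \<in> Z" unfolding divhull_def by auto
  then show ?thesis using Z_uminus[of "of_nat a * x"] unfolding divhull_def by auto
qed

lemma divhull_diff: "x \<in> divhull Z \<Longrightarrow> y \<in> divhull Z \<Longrightarrow> x - y \<in> divhull Z"
  using divhull_add[of x "-y"] divhull_uminus[of y] by simp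

lemma divhull_divide_nat: "x \<in> divhull Z \<Longrightarrow> d \<ge> 1 \<Longrightarrow> x / of_nat d \<in> divhull Z"
proof -
  assume "x \<in> divhull Z" and d: "d \<ge> 1"
  then obtain a :: nat where a: "a \<ge> 1" "of_nat a * x \<in> Z" unfolding divhull_def by auto
  have "of_nat (a * d) * (x / of_nat d) = of_nat a * x" using d by simp
  moreover have "a * d \<ge> 1" using a d by (simp add: Suc_le_eq)
  ultimately show ?thesis using a(2) unfolding divhull_def by (intro CollectI exI[of _ "a * d"]) simp
qed

lemma divhull_inverse_nat: "d \<ge> 1 \<Longrightarrow> 1 / of_nat d \<in> divhull Z"
  using divhull_divide_nat[OF Z_divhull[OF Z_one]] .

definition cong_rel :: "nat \<Rightarrow> ('k \<times> 'k) set" where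
  "cong_rel n = {(x, y). x \<in> Z \<and> y \<in> Z \<and> x - y \<in> nmult Z n}"

lemma equiv_cong_rel: "equiv Z (cong_rel n)"
proof (rule equivI)
  show "cong_rel n \<subseteq> Z \<times> Z" unfolding cong_rel_def by auto
  show "refl_on Z (cong_rel n)" unfolding refl_on_def cong_rel_def nmult_iff using Z_zero by auto
  show "sym (cong_rel n)" unfolding sym_def cong_rel_def nmult_iff
  proof clarify
    fix x y z assume "x \<in> Z" "y \<in> Z" "z \<in> Z" "x - y = of_nat n * z"
    then show "\<exists>z\<in>Z. y - x = of_nat n * z" using Z_uminus[of z] by (intro bexI[of _ "-z"]) auto
  qed
  show "trans (cong_rel n)" unfolding trans_def cong_rel_def
  proof clarify
    fix x y w assume "x - y \<in> nmult Z n" "y - w \<in> nmult Z n"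
    then show "x - w \<in> nmult Z n" using nmult_add by fastforce
  qed
qed

lemma nat_eq_if_diff_in_nmult:
  assumes ab: "a < n" "b < n" and t: "t \<in> Z" "of_nat a - of_nat b = (of_nat n :: 'k) * t"
  shows "a = b"
proof (rule ccontr)
  assume "a \<noteq> b"
  then have "t \<noteq> 0" using t(2) by auto
  then have "1 \<le> \<bar>t\<bar>" using t(1) Z_nonzero_abs_ge_one by blast
  then have "of_nat n \<le> \<bar>(of_nat a - of_nat b) :: 'k\<bar>"
    unfolding t(2) by (simp add: abs_mult mult_le_cancel_left1)
  moreover have "\<bar>(of_nat a - of_nat b) :: 'k\<bar> < of_nat n"
  proof -
    have "a < b + n" "b < a + n" using ab by auto
    then have "(of_nat a::'k) < of_nat b + of_nat n" "(of_nat b::'k) < of_nat a + of_nat n"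
      by (metis of_nat_add of_nat_less_iff)+
    then show ?thesis unfolding abs_less_iff by (simp add: algebra_simps)
  qed
  ultimately show False by simp
qed

text \<open>The index condition \<open>|Z/nZ| = n\<close> is used only here: the residues \<open>0, \<dots>, n - 1\<close>
  are pairwise incongruent, so they exhaust all \<open>n\<close> classes.\<close>

lemma Z_residue:
  assumes "n \<ge> 1" "z \<in> Z"
  shows "\<exists>s<n. \<exists>t\<in>Z. z = of_nat n * t + of_nat s"
proof -
  define cls where "cls s = cong_rel n `` {of_nat s}" for s :: nat
  have "\<forall>n::nat. n \<ge> 1 \<longrightarrow> card (Z // {(x, y). x \<in> Z \<and> y \<in> Z \<and> x - y \<in> nmult Z n}) = n"
    using Zgroup unfolding Zgroup_def by (elim conjE)
  then have card: "card (Z // cong_rel n) = n" using assms(1) unfolding cong_rel_def by simp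
  have fin: "finite (Z // cong_rel n)" using card assms(1) by (intro card_ge_0_finite) simp
  have sub: "cls ` {0..<n} \<subseteq> Z // cong_rel n"
    unfolding cls_def using Z_of_nat by (auto intro: quotientI)
  have inj: "inj_on cls {0..<n}"
  proof (rule inj_onI)
    fix a b assume ab: "a \<in> {0..<n}" "b \<in> {0..<n}" "cls a = cls b"
    then have "(of_nat a, of_nat b) \<in> cong_rel n"
      unfolding cls_def using Z_of_nat by (metis eq_equiv_class equiv_cong_rel equiv_class_self)
    then obtain t where t: "t \<in> Z" "of_nat a - of_nat b = (of_nat n :: 'k) * t"
      unfolding cong_rel_def nmult_iff by auto
    show "a = b" using nat_eq_if_diff_in_nmult t ab by simp
  qed
  then have "cls ` {0..<n} = Z // cong_rel n"
    using card_subset_eq[OF fin sub] card card_image[OF inj] by simp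
  moreover have "cong_rel n `` {z} \<in> Z // cong_rel n" using assms(2) by (auto intro: quotientI)
  ultimately have "cong_rel n `` {z} \<in> cls ` {0..<n}" by simp
  then obtain s where s: "s < n" "cong_rel n `` {z} = cong_rel n `` {of_nat s}"
    unfolding cls_def by auto
  then have "(z, of_nat s) \<in> cong_rel n"
    using eq_equiv_class_iff[OF equiv_cong_rel] assms(2) Z_of_nat by blast
  then obtain t where "t \<in> Z" "z - of_nat s = of_nat n * t"
    unfolding cong_rel_def nmult_iff by blast
  then have "t \<in> Z" "z = of_nat n * t + of_nat s" by (simp_all add: diff_eq_eq)
  with s(1) show ?thesis by blast
qed

lemma divhull_floor: assumes "q \<in> divhull Z" shows "\<exists>t\<in>Z. t \<le> q \<and> q < t + 1"
proof -
  obtain n :: nat where n: "n \<ge> 1" "of_nat n * q \<in> Z" using assms unfolding divhull_def by auto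
  obtain s t where st: "s < n" "t \<in> Z" "of_nat n * q = of_nat n * t + of_nat s"
    using Z_residue[OF n] by blast
  have np: "(0::'k) < of_nat n" using n by simp
  have "q = t + of_nat s / of_nat n" using st(3) np by (simp add: field_simps)
  moreover have "of_nat s / of_nat n < (1::'k)" using st(1) np by (simp add: divide_less_eq)
  ultimately show ?thesis using st(2) by (intro bexI[of _ t]) auto
qed

lemma divhull_max: "x \<in> divhull Z \<Longrightarrow> y \<in> divhull Z \<Longrightarrow> max x y \<in> divhull Z"
  by (simp add: max_def)

lemma divhull_less_Z: "q \<in> divhull Z \<Longrightarrow> \<exists>t\<in>Z. q < t"
  using divhull_floor Z_add[OF _ Z_one] by blast

lemma Z_residue_above:
  assumes c: "c \<in> divhull Z" and M: "M \<ge> 1"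
  shows "\<exists>t\<in>Z. c < of_nat r + of_nat M * t"
proof -
  obtain t where t: "t \<in> Z" "max c 0 < t"
    using divhull_less_Z[OF divhull_max[OF c Z_divhull[OF Z_zero]]] by blast
  have "0 \<le> (of_nat M - 1) * t" using M t(2) by simp
  then have "t \<le> of_nat M * t" by (simp add: left_diff_distrib)
  moreover have "c < t" "(0::'k) \<le> of_nat r" using t(2) by simp_all
  ultimately show ?thesis using t(1) by (intro bexI[of _ t]) linarith
qed

lemma nmult_coarsen:
  assumes "x - of_nat (\<rho> + Nj * s) \<in> nmult Z (n * Nj)"
  shows "x - of_nat \<rho> \<in> nmult Z Nj"
proof -
  obtain w where w: "w \<in> Z" "x - of_nat (\<rho> + Nj * s) = of_nat (n * Nj) * w"
    using assms unfolding nmult_iff by blast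
  have "x - of_nat \<rho> = of_nat Nj * (of_nat s + of_nat n * w)" using w(2)
    by (simp add: algebra_simps)
  moreover have "of_nat s + of_nat n * w \<in> Z" using Z_add[OF Z_of_nat Z_of_nat_mult[OF w(1)]] .
  ultimately show ?thesis unfolding nmult_iff by blast
qed

lemma residue_refine:
  assumes n: "n \<ge> 1" and x: "x - of_nat \<rho> \<in> nmult Z Nj"
  shows "\<exists>s<n. x - of_nat (\<rho> + Nj * s) \<in> nmult Z (n * Nj)"
proof -
  obtain t where t: "t \<in> Z" "x - of_nat \<rho> = of_nat Nj * t" using x unfolding nmult_iff by blast
  obtain s t' where st: "s < n" "t' \<in> Z" "t = of_nat n * t' + of_nat s" using Z_residue[OF n t(1)] by blast
  have "x - of_nat (\<rho> + Nj * s) = of_nat (n * Nj) * t'" using t(2) st(3) by (simp add: algebra_simps)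
  then show ?thesis using st(1,2) unfolding nmult_iff by blast
qed

lemma residue_refine_unique:
  assumes Nj: "Nj \<ge> 1" and s1: "s1 < n" and s2: "s2 < n"
    and h1: "x - of_nat (\<rho> + Nj * s1) \<in> nmult Z (n * Nj)"
    and h2: "x - of_nat (\<rho> + Nj * s2) \<in> nmult Z (n * Nj)"
  shows "s1 = s2"
proof -
  obtain t1 where t1: "t1 \<in> Z" "x - of_nat (\<rho> + Nj * s1) = of_nat (n * Nj) * t1" using h1 unfolding nmult_iff by blast
  obtain t2 where t2: "t2 \<in> Z" "x - of_nat (\<rho> + Nj * s2) = of_nat (n * Nj) * t2" using h2 unfolding nmult_iff by blast
  have "of_nat Nj * (of_nat s2 - of_nat s1) = of_nat Nj * (of_nat n * (t1 - t2))"
    using t1(2) t2(2) by (simp add: algebra_simps)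
  moreover have "(of_nat Nj :: 'k) \<noteq> 0" using Nj by simp
  ultimately have e: "of_nat s2 - of_nat s1 = of_nat n * (t1 - t2)" by simp
  show ?thesis using nat_eq_if_diff_in_nmult[OF s2 s1 Z_diff[OF t1(1) t2(1)] e] by simp
qed

lemma congruent_in_gap:
  assumes z: "z \<in> Z" and c: "c \<in> divhull Z" and Nn: "Nn \<ge> 1" and zV: "Fin z \<le> V"
    and cV: "Fin (c + of_nat Nn) < V"
  shows "\<exists>x\<in>Z. c < x \<and> z \<le> x \<and> Fin x \<le> V \<and> x - z \<in> nmult Z Nn"
proof (cases "c < z")
  case True
  have "z - z \<in> nmult Z Nn" unfolding nmult_iff using Z_zero by (intro bexI[of _ 0]) simp_all
  then show ?thesis using True z zV by (intro bexI[of _ z] conjI) simp_all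
next
  case False
  have Np: "(0::'k) < of_nat Nn" using Nn by simp
  obtain t where t: "t \<in> Z" "t \<le> (c - z) / of_nat Nn" "(c - z) / of_nat Nn < t + 1"
    using divhull_floor[OF divhull_divide_nat[OF divhull_diff[OF c Z_divhull[OF z]] Nn]] by blast
  define x where "x = z + of_nat Nn * (t + 1)"
  have t1: "t + 1 \<in> Z" using Z_add[OF t(1) Z_one] .
  have "of_nat Nn * t \<le> c - z" using t(2) Np by (simp add: pos_le_divide_eq mult.commute)
  then have "x \<le> c + of_nat Nn" unfolding x_def by (simp add: algebra_simps)
  then have "Fin x \<le> V" using cV by (cases V) auto
  moreover have "c - z < of_nat Nn * (t + 1)" using t(3) Np by (simp add: pos_divide_less_eq mult.commute)
  then have "c < x" unfolding x_def by simp
  moreover have "0 \<le> (c - z) / of_nat Nn" using False Np by simp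
  then have "0 \<le> of_nat Nn * (t + 1)" using t(3) by (intro mult_nonneg_nonneg) auto
  then have "z \<le> x" unfolding x_def by simp
  moreover have "x - z \<in> nmult Z Nn" unfolding nmult_iff x_def using t1 by (intro bexI[of _ "t + 1"]) simp_all
  moreover have "x \<in> Z" unfolding x_def using Z_add[OF z Z_of_nat_mult[OF t1]] .
  ultimately show ?thesis by blast
qed

end

section \<open>The topology of \<open>\<Omega>\<^sup>m\<close>\<close>

context z_group begin

lemma omg_Fin[simp]: "Fin q \<in> omg Z \<longleftrightarrow> q \<in> divhull Z" unfolding omg_def by auto
lemma omg_PInf[simp]: "PInf \<in> omg Z" unfolding omg_def by auto
lemma gam_Fin[simp]: "Fin q \<in> gam Z \<longleftrightarrow> q \<in> Z" unfolding gam_def by auto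
lemma gam_PInf[simp]: "PInf \<in> gam Z" unfolding gam_def by auto
lemma omg_if_gam: "x \<in> gam Z \<Longrightarrow> x \<in> omg Z"
  by (cases x) (auto simp: Z_divhull)
lemma fin_val_divhull: "x \<in> omg Z \<Longrightarrow> fin_val x \<in> divhull Z"
  by (cases x) (auto simp: Z_divhull Z_zero)

definition ray :: "'k \<Rightarrow> 'k ext set" where "ray c = {y \<in> omg Z. Fin c < y}"
definition ival :: "'k \<Rightarrow> 'k \<Rightarrow> 'k ext set" where "ival a b = {y \<in> omg Z. Fin a < y \<and> y < Fin b}"

lemma ray_open: "c \<in> divhull Z \<Longrightarrow> basic_open Z (ray c)"
  unfolding basic_open_def ray_def
  by (intro disjI2 bexI[where x="Fin c"]) auto

lemma PInf_in_ray: "PInf \<in> ray c" unfolding ray_def by simp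

lemma ival_open: "a \<in> divhull Z \<Longrightarrow> b \<in> divhull Z \<Longrightarrow> basic_open Z (ival a b)"
  unfolding basic_open_def ival_def
  by (intro disjI1 bexI[where x="Fin a"] bexI[where x="Fin b"]) auto

lemma Fin_in_ival: "a < q \<Longrightarrow> q < b \<Longrightarrow> q \<in> divhull Z \<Longrightarrow> Fin q \<in> ival a b"
  unfolding ival_def by simp

definition std_nbhd :: "'k ext \<Rightarrow> 'k ext set" where "std_nbhd x = ray (fin_val x - 1)"

lemma std_nbhd_open: "x \<in> omg Z \<Longrightarrow> basic_open Z (std_nbhd x) \<and> x \<in> std_nbhd x"
proof -
  assume x: "x \<in> omg Z"
  have "fin_val x - 1 \<in> divhull Z"
    using divhull_diff[OF fin_val_divhull[OF x] Z_divhull[OF Z_one]] .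
  then have "basic_open Z (std_nbhd x)" unfolding std_nbhd_def by (rule ray_open)
  moreover have "x \<in> std_nbhd x" using x unfolding std_nbhd_def ray_def by (cases x) auto
  ultimately show ?thesis by simp
qed

lemma basic_open_PInf_ray: assumes "basic_open Z S" "PInf \<in> S" shows "\<exists>c\<in>divhull Z. ray c \<subseteq> S"
  using assms unfolding basic_open_def
proof (elim disjE bexE)
  fix a b assume "S = {y \<in> omg Z. a < y \<and> y < b}" "PInf \<in> S"
  then show ?thesis by simp
next
  fix a assume a: "a \<in> omg Z" "S = {y \<in> omg Z. a < y}" "PInf \<in> S"
  then obtain c where c: "a = Fin c" by (cases a) auto
  then have "c \<in> divhull Z" using a by simp
  then show ?thesis using a c unfolding ray_def by auto
qed

lemma omg_max: "a \<in> omg Z \<Longrightarrow> b \<in> omg Z \<Longrightarrow> max a b \<in> omg Z" by (simp add: max_def)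
lemma omg_min: "a \<in> omg Z \<Longrightarrow> b \<in> omg Z \<Longrightarrow> min a b \<in> omg Z" by (simp add: min_def)

lemma basic_open_between: "a \<in> omg Z \<Longrightarrow> b \<in> omg Z \<Longrightarrow> basic_open Z {y \<in> omg Z. a < y \<and> y < b}"
  unfolding basic_open_def by (rule disjI1, rule bexI[where x=a], rule bexI[where x=b]) auto
lemma basic_open_above: "a \<in> omg Z \<Longrightarrow> basic_open Z {y \<in> omg Z. a < y}"
  unfolding basic_open_def by (rule disjI2, rule bexI[where x=a]) auto

lemma basic_open_Int: assumes "basic_open Z S" "basic_open Z T" shows "basic_open Z (S \<inter> T)"
proof -
  from assms(1) consider (i1) a b where "a \<in> omg Z" "b \<in> omg Z" "S = {y \<in> omg Z. a < y \<and> y < b}"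
    | (u1) a where "a \<in> omg Z" "S = {y \<in> omg Z. a < y}"
    unfolding basic_open_def by blast
  then show ?thesis
  proof cases
    case i1
    from assms(2) consider (i2) a' b' where "a' \<in> omg Z" "b' \<in> omg Z" "T = {y \<in> omg Z. a' < y \<and> y < b'}"
      | (u2) a' where "a' \<in> omg Z" "T = {y \<in> omg Z. a' < y}"
      unfolding basic_open_def by blast
    then show ?thesis
    proof cases
      case i2
      have "S \<inter> T = {y \<in> omg Z. max a a' < y \<and> y < min b b'}" using i1 i2 by auto
      then show ?thesis using basic_open_between[OF omg_max[OF i1(1) i2(1)] omg_min[OF i1(2) i2(2)]] by simp
    next
      case u2
      have "S \<inter> T = {y \<in> omg Z. max a a' < y \<and> y < b}" using i1 u2 by auto
      then show ?thesis using basic_open_between[OF omg_max[OF i1(1) u2(1)] i1(2)] by simp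
    qed
  next
    case u1
    from assms(2) consider (i2) a' b' where "a' \<in> omg Z" "b' \<in> omg Z" "T = {y \<in> omg Z. a' < y \<and> y < b'}"
      | (u2) a' where "a' \<in> omg Z" "T = {y \<in> omg Z. a' < y}"
      unfolding basic_open_def by blast
    then show ?thesis
    proof cases
      case i2
      have "S \<inter> T = {y \<in> omg Z. max a a' < y \<and> y < b'}" using u1 i2 by auto
      then show ?thesis using basic_open_between[OF omg_max[OF u1(1) i2(1)] i2(2)] by simp
    next
      case u2
      have "S \<inter> T = {y \<in> omg Z. max a a' < y}" using u1 u2 by auto
      then show ?thesis using basic_open_above[OF omg_max[OF u1(1) u2(1)]] by simp
    qed
  qed
qed

lemma clos_lengthD: "x \<in> clos Z m A \<Longrightarrow> length x = m \<and> set x \<subseteq> omg Z"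
  unfolding clos_def by auto

lemma clos_nth_omg: "x \<in> clos Z m A \<Longrightarrow> i < m \<Longrightarrow> x ! i \<in> omg Z"
  using clos_lengthD[of x m A] nth_mem[of i x] by auto

lemma clos_meets_box:
  assumes "x \<in> clos Z m A" "\<And>i. i < m \<Longrightarrow> basic_open Z (S i) \<and> x ! i \<in> S i"
  shows "\<exists>a\<in>A. \<forall>i<m. a ! i \<in> S i"
proof -
  have len: "length x = m" using clos_lengthD[OF assms(1)] by simp
  have "basic_nbhd Z m x (map S [0..<m])"
    unfolding basic_nbhd_def using assms(2) by simp
  then obtain a where "a \<in> A" "\<forall>i<m. a ! i \<in> map S [0..<m] ! i"
    using assms(1) unfolding clos_def by blast
  then show ?thesis by auto
qed

lemma closI: "length x = m \<Longrightarrow> set x \<subseteq> omg Z \<Longrightarrow>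
   (\<And>Ss. basic_nbhd Z m x Ss \<Longrightarrow> \<exists>a\<in>A. \<forall>i<m. a ! i \<in> Ss ! i) \<Longrightarrow> x \<in> clos Z m A"
  unfolding clos_def by blast

lemma clos_mono: "A \<subseteq> B \<Longrightarrow> clos Z m A \<subseteq> clos Z m B"
  unfolding clos_def by blast

lemma subset_clos: assumes "\<And>a. a \<in> A \<Longrightarrow> length a = m \<and> set a \<subseteq> omg Z" shows "A \<subseteq> clos Z m A"
proof
  fix x assume x: "x \<in> A"
  show "x \<in> clos Z m A"
  proof (rule closI)
    show "length x = m" "set x \<subseteq> omg Z" using assms[OF x] by auto
    fix Ss assume "basic_nbhd Z m x Ss"
    then show "\<exists>a\<in>A. \<forall>i<m. a ! i \<in> Ss ! i" using x unfolding basic_nbhd_def by blast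
  qed
qed

lemma clos_idem: "clos Z m (clos Z m A) = clos Z m A"
proof
  show "clos Z m (clos Z m A) \<subseteq> clos Z m A"
  proof
    fix x assume x: "x \<in> clos Z m (clos Z m A)"
    show "x \<in> clos Z m A"
    proof (rule closI)
      show "length x = m" "set x \<subseteq> omg Z" using clos_lengthD[OF x] by auto
      fix Ss assume Ss: "basic_nbhd Z m x Ss"
      then obtain c where c: "c \<in> clos Z m A" "\<forall>i<m. c ! i \<in> Ss ! i"
        using x unfolding clos_def by blast
      have "basic_nbhd Z m c Ss" using Ss c(2) unfolding basic_nbhd_def by auto
      then show "\<exists>a\<in>A. \<forall>i<m. a ! i \<in> Ss ! i" using c(1) unfolding clos_def by blast
    qed
  qed
  show "clos Z m A \<subseteq> clos Z m (clos Z m A)"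
  proof (rule subset_clos)
    fix a assume "a \<in> clos Z m A"
    then show "length a = m \<and> set a \<subseteq> omg Z" by (rule clos_lengthD)
  qed
qed

lemma subset_clos_trans: "A \<subseteq> clos Z m B \<Longrightarrow> B \<subseteq> clos Z m C \<Longrightarrow> A \<subseteq> clos Z m C"
  using clos_mono[of B "clos Z m C" m] clos_idem[of m C] by blast

lemma clos_empty: "clos Z m {} = {}"
proof (rule ccontr)
  assume "clos Z m {} \<noteq> {}"
  then obtain x where x: "x \<in> clos Z m {}" by blast
  have "\<exists>a\<in>{}. \<forall>i<m. a ! i \<in> std_nbhd (x ! i)"
  proof (rule clos_meets_box[OF x])
    fix i assume "i < m"
    then show "basic_open Z (std_nbhd (x ! i)) \<and> x ! i \<in> std_nbhd (x ! i)"
      by (intro std_nbhd_open clos_nth_omg[OF x])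
  qed
  then show False by simp
qed

lemma take_clos:
  assumes x: "x \<in> clos Z m A" and k: "k \<le> m"
  shows "take k x \<in> clos Z k (take k ` A)"
proof (rule closI)
  show "length (take k x) = k" using clos_lengthD[OF x] k by simp
  show "set (take k x) \<subseteq> omg Z" using set_take_subset[of k x] clos_lengthD[OF x] by auto
  fix Ss assume Ss: "basic_nbhd Z k (take k x) Ss"
  define S where "S i = (if i < k then Ss ! i else std_nbhd (x ! i))" for i
  have "\<exists>a\<in>A. \<forall>i<m. a ! i \<in> S i"
  proof (rule clos_meets_box[OF x])
    fix i assume i: "i < m"
    show "basic_open Z (S i) \<and> x ! i \<in> S i"
    proof (cases "i < k")
      case True
      have "basic_open Z (Ss ! i)" "take k x ! i \<in> Ss ! i"
        using Ss True unfolding basic_nbhd_def by auto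
      then show ?thesis using True by (simp add: S_def)
    next
      case False
      then show ?thesis using std_nbhd_open[OF clos_nth_omg[OF x i]] unfolding S_def by simp
    qed
  qed
  then obtain a where a: "a \<in> A" "\<forall>i<m. a ! i \<in> S i" by blast
  have "\<forall>i<k. take k a ! i \<in> Ss ! i"
  proof (intro allI impI)
    fix i assume i: "i < k"
    then have "a ! i \<in> S i" using a(2) k by auto
    then show "take k a ! i \<in> Ss ! i" using i by (simp add: S_def)
  qed
  then show "\<exists>a\<in>take k ` A. \<forall>i<k. a ! i \<in> Ss ! i" using a(1) by blast
qed

lemma gam_unit_ival_eq: assumes "v \<in> Z" "y \<in> gam Z" "y \<in> ival (v - 1) (v + 1)" shows "y = Fin v"
proof -
  obtain z where z: "y = Fin z" using assms(3) unfolding ival_def by (cases y) auto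
  have zZ: "z \<in> Z" using assms(2) z by simp
  have "v - 1 < z" "z < v + 1" using assms(3) z unfolding ival_def by auto
  then have "\<bar>z - v\<bar> < 1" by (simp add: abs_less_iff)
  then have "z - v = 0" using Z_abs_less_one Z_diff[OF zZ assms(1)] by blast
  then show ?thesis using z by simp
qed

definition gam_tuples :: "nat \<Rightarrow> 'k ext list set" where
  "gam_tuples m = {a. length a = m \<and> set a \<subseteq> gam Z}"

lemma gam_tuples_omg: "a \<in> gam_tuples m \<Longrightarrow> length a = m \<and> set a \<subseteq> omg Z"
  unfolding gam_tuples_def using omg_if_gam by auto

lemma subset_clos_gam_tuples: "A \<subseteq> gam_tuples m \<Longrightarrow> A \<subseteq> clos Z m A"
proof -
  assume A: "A \<subseteq> gam_tuples m"
  show ?thesis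
  proof (rule subset_clos)
    fix a assume "a \<in> A"
    then have "a \<in> gam_tuples m" using A by blast
    then show "length a = m \<and> set a \<subseteq> omg Z" by (rule gam_tuples_omg)
  qed
qed

lemma clos_nth_gam:
  assumes A: "A \<subseteq> gam_tuples m" and x: "x \<in> clos Z m A" and i: "i < m"
  shows "x ! i \<in> gam Z"
proof (cases "x ! i")
  case PInf
  then show ?thesis by simp
next
  case (Fin q)
  then have q: "q \<in> divhull Z" using clos_nth_omg[OF x i] by simp
  then obtain n :: nat where n: "n \<ge> 1" "of_nat n * q \<in> Z" unfolding divhull_def by auto
  define e :: 'k where "e = 1 / of_nat (2 * n)"
  have e: "e \<in> divhull Z" unfolding e_def by (rule divhull_inverse_nat) (use n in simp)
  have epos: "0 < e" unfolding e_def using n by simp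
  define S where "S j = (if j = i then ival (q - e) (q + e) else std_nbhd (x ! j))" for j
  have "\<exists>a\<in>A. \<forall>j<m. a ! j \<in> S j"
  proof (rule clos_meets_box[OF x])
    fix j assume j: "j < m"
    show "basic_open Z (S j) \<and> x ! j \<in> S j"
    proof (cases "j = i")
      case True
      have "basic_open Z (ival (q - e) (q + e))" by (rule ival_open[OF divhull_diff[OF q e] divhull_add[OF q e]])
      moreover have "Fin q \<in> ival (q - e) (q + e)" using epos q by (intro Fin_in_ival) auto
      ultimately show ?thesis using True Fin unfolding S_def by simp
    next
      case False
      then show ?thesis using std_nbhd_open[OF clos_nth_omg[OF x j]] unfolding S_def by simp
    qed
  qed
  then obtain a where a1: "a \<in> A" and a2: "\<forall>j<m. a ! j \<in> S j" by blast
  have "a ! i \<in> S i" using a2 i by blast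
  then have ai: "a ! i \<in> ival (q - e) (q + e)" by (simp add: S_def)
  have la: "a \<in> gam_tuples m" using A a1 by blast
  have "a ! i \<in> gam Z" using nth_mem[of i a] i la unfolding gam_tuples_def by auto
  then obtain z where z: "a ! i = Fin z" "z \<in> Z" using ai unfolding ival_def by (cases "a ! i") auto
  have "q - e < z" "z < q + e" using ai z(1) unfolding ival_def by auto
  then have lt1: "\<bar>z - q\<bar> < e" by (simp add: abs_less_iff)
  have npos: "(0::'k) < of_nat n" using n by simp
  have eq: "of_nat n * z - of_nat n * q = of_nat n * (z - q)" by (simp add: right_diff_distrib)
  have "\<bar>of_nat n * z - of_nat n * q\<bar> = of_nat n * \<bar>z - q\<bar>" unfolding eq by (simp add: abs_mult)
  also have "\<dots> < of_nat n * e" using mult_strict_left_mono[OF lt1 npos] .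
  also have "of_nat n * e = 1 / 2" unfolding e_def using n by simp
  finally have lt: "\<bar>of_nat n * z - of_nat n * q\<bar> < 1" by simp
  have "of_nat n * z - of_nat n * q \<in> Z" using Z_diff[OF Z_of_nat_mult[OF z(2)] n(2)] .
  then have "of_nat n * z - of_nat n * q = 0" using Z_abs_less_one lt by blast
  then have "z = q" using npos unfolding eq by simp
  then show ?thesis using Fin z(2) by simp
qed

lemma clos_gam_tuples: assumes A: "A \<subseteq> gam_tuples m" and x: "x \<in> clos Z m A" shows "x \<in> gam_tuples m"
proof -
  have len: "length x = m" using clos_lengthD[OF x] by simp
  have "set x \<subseteq> gam Z"
  proof
    fix y assume "y \<in> set x"
    then obtain i where "i < length x" "x ! i = y" by (auto simp: in_set_conv_nth)
    then show "y \<in> gam Z" using clos_nth_gam[OF A x] len by blast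
  qed
  then show ?thesis using len unfolding gam_tuples_def by simp
qed

definition is_box :: "nat \<Rightarrow> 'k ext list \<Rightarrow> (nat \<Rightarrow> 'k ext set) \<Rightarrow> bool" where
  "is_box k x W \<longleftrightarrow> (\<forall>i<k. basic_open Z (W i) \<and> x ! i \<in> W i)"

definition in_box :: "nat \<Rightarrow> (nat \<Rightarrow> 'k ext set) \<Rightarrow> 'k ext list \<Rightarrow> bool" where
  "in_box k W y \<longleftrightarrow> (\<forall>i<k. y ! i \<in> W i)"

lemma is_box_Int: "is_box k x W1 \<Longrightarrow> is_box k x W2 \<Longrightarrow> is_box k x (\<lambda>i. W1 i \<inter> W2 i)"
  unfolding is_box_def using basic_open_Int by blast

lemma is_box_Suc: "is_box (Suc n) x W \<Longrightarrow> is_box n x W"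
  unfolding is_box_def by auto

lemma is_box_take: "is_box n (take n x) V \<Longrightarrow> is_box n x V"
  unfolding is_box_def by auto

lemma in_box_take: "in_box n V (take n a) \<longleftrightarrow> in_box n V a"
  unfolding in_box_def by auto

lemma in_box_snoc: "length y = n \<Longrightarrow> in_box n V y \<Longrightarrow> v \<in> V n \<Longrightarrow> in_box (Suc n) V (y @ [v])"
  unfolding in_box_def by (auto simp: nth_append less_Suc_eq)

lemma clos_exact_approx:
  assumes E: "E \<subseteq> gam_tuples m" and x: "x \<in> clos Z m E" and k: "k \<le> m" and T: "is_box k x T"
  shows "\<exists>a\<in>E. in_box k T a \<and> (\<forall>i<m. x ! i \<noteq> PInf \<longrightarrow> a ! i = x ! i)"
proof -
  define T' where "T' i = (if i < k then T i else std_nbhd (x ! i))" for i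
  define V where "V i = (if x ! i = PInf then T' i
    else T' i \<inter> ival (fin_val (x ! i) - 1) (fin_val (x ! i) + 1))" for i
  have "\<exists>a\<in>E. \<forall>i<m. a ! i \<in> V i"
  proof (rule clos_meets_box[OF x])
    fix i assume i: "i < m"
    have Ti: "basic_open Z (T' i)" "x ! i \<in> T' i"
      using T std_nbhd_open[OF clos_nth_omg[OF x i]] unfolding is_box_def T'_def by auto
    show "basic_open Z (V i) \<and> x ! i \<in> V i"
    proof (cases "x ! i")
      case PInf
      then show ?thesis using Ti unfolding V_def by simp
    next
      case (Fin v)
      have vd: "v \<in> divhull Z" using clos_nth_gam[OF E x i] Fin Z_divhull by simp
      have o1: "1 \<in> divhull Z" using Z_divhull[OF Z_one] .
      have "basic_open Z (ival (v - 1) (v + 1))"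
        by (rule ival_open[OF divhull_diff[OF vd o1] divhull_add[OF vd o1]])
      moreover have "Fin v \<in> ival (v - 1) (v + 1)" using vd by (intro Fin_in_ival) auto
      ultimately show ?thesis using Ti Fin basic_open_Int unfolding V_def by simp
    qed
  qed
  then obtain a where a: "a \<in> E" "\<forall>i<m. a ! i \<in> V i" by blast
  have "in_box k T a" unfolding in_box_def
  proof (intro allI impI)
    fix i assume i: "i < k"
    then have "a ! i \<in> V i" using a(2) k by simp
    then show "a ! i \<in> T i" using i unfolding V_def T'_def by (auto split: if_splits)
  qed
  moreover have "a ! i = x ! i" if i: "i < m" and ne: "x ! i \<noteq> PInf" for i
  proof -
    obtain v where Fin: "x ! i = Fin v" using ne by (cases "x ! i") auto
    have v: "v \<in> Z" using clos_nth_gam[OF E x i] Fin by simp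
    have "length a = m" "set a \<subseteq> gam Z" using a(1) E unfolding gam_tuples_def by auto
    then have "a ! i \<in> gam Z" using i nth_mem[of i a] by auto
    moreover have "a ! i \<in> ival (v - 1) (v + 1)" using a(2) i Fin unfolding V_def by auto
    ultimately show "a ! i = x ! i" using gam_unit_ival_eq[OF v] Fin by simp
  qed
  ultimately show ?thesis using a(1) by blast
qed

lemma clos_exact_approx_finite:
  assumes "E \<subseteq> gam_tuples m" and "x \<in> clos Z m E"
  shows "\<exists>a\<in>E. \<forall>i<m. x ! i \<noteq> PInf \<longrightarrow> a ! i = x ! i"
  using clos_exact_approx[OF assms le0, of "\<lambda>_. {}"] by (simp add: is_box_def in_box_def)

section \<open>Precells layer by layer\<close>

definition level :: "nat \<Rightarrow> nat \<Rightarrow> nat set \<Rightarrow> 'k ext list set \<Rightarrow> 'k ext list set \<Rightarrow> bool" where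
 "level n k I' Dk Dk1 \<longleftrightarrow> (\<exists>\<mu> \<nu> (\<rho>::nat).
          affine_on Z {i \<in> I'. i < k} Dk \<mu> \<and>
          affine_on Z {i \<in> I'. i < k} Dk \<nu> \<and>
          largely_cont Z k Dk \<mu> \<and>
          largely_cont Z k Dk \<nu> \<and>
          (\<forall>y\<in>Dk. Fin 0 \<le> \<mu> y \<and> Fin 0 \<le> \<nu> y) \<and>
          \<rho> < n \<and>
          Dk1 = {a \<in> Fgam Z (Suc k) I'. butlast a \<in> Dk \<and>
                 \<mu> (butlast a) \<le> a ! k \<and> a ! k \<le> \<nu> (butlast a) \<and>
                 cong_ext Z n (a ! k) (Fin (of_nat \<rho>))})"

lemma lcp_rev_Cons_level: "lcp_rev Z (n # Ns) A = (\<exists>I'. I' \<subseteq> {0..<Suc (length Ns)} \<and>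
   A \<subseteq> Fgam Z (Suc (length Ns)) I' \<and> lcp_rev Z Ns (butlast ` A) \<and>
   level n (length Ns) I' (butlast ` A) A)"
  unfolding lcp_rev.simps level_def by (rule refl)

definition level_at :: "nat list \<Rightarrow> 'k ext list set \<Rightarrow> nat \<Rightarrow> bool" where
  "level_at N E k \<longleftrightarrow> (\<exists>I'. I' \<subseteq> {0..<Suc k} \<and> take (Suc k) ` E \<subseteq> Fgam Z (Suc k) I' \<and>
      level (N ! k) k I' (take k ` E) (take (Suc k) ` E))"

definition levelwise :: "nat list \<Rightarrow> 'k ext list set \<Rightarrow> bool" where
  "levelwise N E \<longleftrightarrow> E \<noteq> {} \<and> (\<forall>k<length N. level_at N E k)"

lemma image_eq_self: "(\<And>a. a \<in> E \<Longrightarrow> f a = a) \<Longrightarrow> f ` E = E"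
  by (metis image_cong image_ident)

lemma level_at_snoc:
  assumes len: "\<forall>a\<in>E. length a = Suc (length xs)" and k: "k < length xs"
  shows "level_at xs (butlast ` E) k = level_at (xs @ [x]) E k"
proof -
  have "take k ` butlast ` E = take k ` E" "take (Suc k) ` butlast ` E = take (Suc k) ` E"
    unfolding image_image using len k by (auto simp: take_butlast intro!: image_cong)
  then show ?thesis unfolding level_at_def using k by (simp add: nth_append)
qed

lemma lc_precell_snoc:
  assumes len: "\<forall>a\<in>E. length a = Suc (length xs)"
  shows "lc_precell Z (xs @ [x]) E \<longleftrightarrow>
    lc_precell Z xs (butlast ` E) \<and> level_at (xs @ [x]) E (length xs)"
proof -
  have "take (Suc (length xs)) ` E = E" by (rule image_eq_self) (simp add: len)
  moreover have "take (length xs) ` E = butlast ` E"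
    using len by (auto simp: butlast_conv_take intro!: image_cong)
  ultimately have "level_at (xs @ [x]) E (length xs) \<longleftrightarrow> (\<exists>I'. I' \<subseteq> {0..<Suc (length xs)} \<and>
      E \<subseteq> Fgam Z (Suc (length xs)) I' \<and> level x (length xs) I' (butlast ` E) E)"
    unfolding level_at_def by simp
  moreover have r: "rev (xs @ [x]) = x # rev xs" by simp
  ultimately show ?thesis unfolding lc_precell_def r lcp_rev_Cons_level length_rev by blast
qed

lemma lc_precell_iff_levelwise: "\<forall>a\<in>E. length a = length N \<Longrightarrow> lc_precell Z N E = levelwise N E"
proof (induction N arbitrary: E rule: rev_induct)
  case Nil
  have "E \<subseteq> {[]}" using Nil by auto
  then show ?case unfolding lc_precell_def levelwise_def by auto
next
  case (snoc x xs)
  have len: "\<forall>a\<in>E. length a = Suc (length xs)" using snoc.prems by simp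
  then have "\<forall>a\<in>butlast ` E. length a = length xs" by auto
  then have IH: "lc_precell Z xs (butlast ` E) = levelwise xs (butlast ` E)" by (rule snoc.IH)
  have "\<forall>k<length xs. level_at xs (butlast ` E) k = level_at (xs @ [x]) E k"
    using level_at_snoc[OF len] by blast
  then show ?case unfolding lc_precell_snoc[OF len] IH levelwise_def by (auto simp: less_Suc_eq)
qed

lemma Fgam_unique: "a \<in> Fgam Z m K1 \<Longrightarrow> a \<in> Fgam Z m K2 \<Longrightarrow> K1 = K2"
  unfolding Fgam_def by auto

lemma Fgam_subset_gam_tuples: "Fgam Z m K \<subseteq> gam_tuples m" unfolding Fgam_def gam_tuples_def by auto

lemma take_Fgam: assumes a: "a \<in> Fgam Z m I" and k: "k \<le> m"
  shows "take k a \<in> Fgam Z k {i \<in> I. i < k}"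
proof -
  have la: "length a = m" and sa: "set a \<subseteq> gam Z" and Ia: "{i. i < m \<and> a ! i \<noteq> PInf} = I"
    using a unfolding Fgam_def by auto
  have "set (take k a) \<subseteq> gam Z" using set_take_subset[of k a] sa by auto
  moreover have "{i. i < k \<and> take k a ! i \<noteq> PInf} = {i \<in> I. i < k}"
  proof -
    have "{i. i < k \<and> take k a ! i \<noteq> PInf} = {i. i < k \<and> a ! i \<noteq> PInf}" by auto
    also have "\<dots> = {i \<in> I. i < k}" using Ia k by auto
    finally show ?thesis .
  qed
  ultimately show ?thesis unfolding Fgam_def using la k by simp
qed

lemma Fgam_nth_in: "a \<in> Fgam Z m I \<Longrightarrow> i < m \<Longrightarrow> i \<in> I \<Longrightarrow> \<exists>z\<in>Z. a ! i = Fin z"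
proof -
  assume a: "a \<in> Fgam Z m I" and i: "i < m" "i \<in> I"
  have "a ! i \<noteq> PInf" using a i unfolding Fgam_def by auto
  moreover have "a ! i \<in> gam Z" using a i nth_mem[of i a] unfolding Fgam_def by auto
  ultimately show ?thesis by (cases "a ! i") auto
qed

lemma Fgam_nth_notin: "a \<in> Fgam Z m I \<Longrightarrow> i < m \<Longrightarrow> i \<notin> I \<Longrightarrow> a ! i = PInf"
  unfolding Fgam_def by auto

lemma affine_on_mono: "Y' \<subseteq> Y \<Longrightarrow> affine_on Z K Y g \<Longrightarrow> affine_on Z K Y' g"
  unfolding affine_on_def by blast

lemma largely_cont_mono: assumes "Y' \<subseteq> Y" "largely_cont Z k Y g" shows "largely_cont Z k Y' g"
proof -
  obtain G where G1: "\<forall>y\<in>Y. G y = g y" and G2: "\<forall>x\<in>clos Z k Y. G x \<in> omg Z"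
    and G3: "\<forall>x\<in>clos Z k Y. \<forall>S. basic_open Z S \<and> G x \<in> S \<longrightarrow>
           (\<exists>Ss. basic_nbhd Z k x Ss \<and> (\<forall>y\<in>clos Z k Y. (\<forall>i<k. y ! i \<in> Ss ! i) \<longrightarrow> G y \<in> S))"
    using assms(2) unfolding largely_cont_def by blast
  have sub: "clos Z k Y' \<subseteq> clos Z k Y" using clos_mono[OF assms(1)] .
  show ?thesis unfolding largely_cont_def
  proof (intro exI[of _ G] conjI ballI allI impI)
    fix y assume "y \<in> Y'" then show "G y = g y" using G1 assms(1) by blast
  next
    fix x assume "x \<in> clos Z k Y'" then show "G x \<in> omg Z" using G2 sub by blast
  next
    fix x S assume x: "x \<in> clos Z k Y'" and S: "basic_open Z S \<and> G x \<in> S"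
    then obtain Ss where Ss: "basic_nbhd Z k x Ss"
        "\<forall>y\<in>clos Z k Y. (\<forall>i<k. y ! i \<in> Ss ! i) \<longrightarrow> G y \<in> S"
      using G3 sub by blast
    then show "\<exists>Ss. basic_nbhd Z k x Ss \<and> (\<forall>y\<in>clos Z k Y'. (\<forall>i<k. y ! i \<in> Ss ! i) \<longrightarrow> G y \<in> S)"
      using sub by blast
  qed
qed

lemma level_restrict:
  assumes "level n k I' Dk Dk1" "Dk' \<subseteq> Dk"
  shows "level n k I' Dk' {a \<in> Dk1. butlast a \<in> Dk'}"
proof -
  obtain \<mu> \<nu> \<rho> where h1: "affine_on Z {i \<in> I'. i < k} Dk \<mu>" and h2: "affine_on Z {i \<in> I'. i < k} Dk \<nu>"
    and h3: "largely_cont Z k Dk \<mu>" and h4: "largely_cont Z k Dk \<nu>"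
    and h5: "\<forall>y\<in>Dk. Fin 0 \<le> \<mu> y \<and> Fin 0 \<le> \<nu> y" and h6: "\<rho> < n"
    and h7: "Dk1 = {a \<in> Fgam Z (Suc k) I'. butlast a \<in> Dk \<and>
                 \<mu> (butlast a) \<le> a ! k \<and> a ! k \<le> \<nu> (butlast a) \<and>
                 cong_ext Z n (a ! k) (Fin (of_nat \<rho>))}"
    using assms(1) unfolding level_def by blast
  have e: "{a \<in> Dk1. butlast a \<in> Dk'} = {a \<in> Fgam Z (Suc k) I'. butlast a \<in> Dk' \<and>
                 \<mu> (butlast a) \<le> a ! k \<and> a ! k \<le> \<nu> (butlast a) \<and>
                 cong_ext Z n (a ! k) (Fin (of_nat \<rho>))}"
    unfolding h7 using assms(2) by blast
  show ?thesis unfolding level_def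
    apply (rule exI[of _ \<mu>], rule exI[of _ \<nu>], rule exI[of _ \<rho>])
    using affine_on_mono[OF assms(2) h1] affine_on_mono[OF assms(2) h2]
      largely_cont_mono[OF assms(2) h3] largely_cont_mono[OF assms(2) h4] h5 h6 e assms(2)
    by blast
qed

end

section \<open>Affine functions near a limit point\<close>

lemma rat_denominator: "\<exists>d::nat. d \<ge> 1 \<and> of_nat d * (r::rat) \<in> \<int>"
proof -
  obtain p q where pq: "quotient_of r = (p, q)" by (cases "quotient_of r") auto
  have q: "q > 0" using quotient_of_denom_pos[OF pq] .
  have r: "r = of_int p / of_int q" using quotient_of_div[OF pq] .
  have "of_nat (nat q) * r = of_int p" using q r by simp
  then show ?thesis using q by (intro exI[of _ "nat q"]) auto
qed

lemma rat_common_denominator: "finite K \<Longrightarrow> \<exists>d::nat. d \<ge> 1 \<and> (\<forall>i\<in>K. of_nat d * (\<alpha> i::rat) \<in> \<int>)"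
proof (induction K rule: finite_induct)
  case empty
  then show ?case by (intro exI[of _ 1]) simp
next
  case (insert x F)
  then obtain d where d: "d \<ge> 1" "\<forall>i\<in>F. of_nat d * \<alpha> i \<in> \<int>" by blast
  obtain e where e: "e \<ge> 1" "of_nat e * \<alpha> x \<in> \<int>" using rat_denominator by blast
  have "\<forall>i\<in>insert x F. of_nat (d * e) * \<alpha> i \<in> \<int>"
  proof
    fix i assume "i \<in> insert x F"
    then consider "i = x" | "i \<in> F" by blast
    then show "of_nat (d * e) * \<alpha> i \<in> \<int>"
    proof cases
      case 1
      have "of_nat (d * e) * \<alpha> i = of_nat d * (of_nat e * \<alpha> x)" using 1 by (simp only: of_nat_mult mult.assoc)
      then show ?thesis using e(2) by (metis Ints_mult Ints_of_nat)
    next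
      case 2
      have "of_nat (d * e) * \<alpha> i = of_nat e * (of_nat d * \<alpha> i)" by (simp only: of_nat_mult mult.assoc mult.commute mult.left_commute)
      then show ?thesis using d(2) 2 by (metis Ints_mult Ints_of_nat)
    qed
  qed
  moreover have "d * e \<ge> 1" using d e by (simp add: Suc_le_eq)
  ultimately show ?case by blast
qed

context z_group begin

lemma affine_on_discrete:
  assumes aff: "affine_on Z K Y f" and fin: "finite K"
    and Yf: "\<forall>y\<in>Y. \<forall>i\<in>K. fin_val (y ! i) \<in> Z"
  shows "(\<forall>y\<in>Y. f y = PInf) \<or>
    (\<exists>d::nat. d \<ge> 1 \<and> (\<forall>y\<in>Y. \<exists>u. f y = Fin u) \<and>
       (\<forall>y\<in>Y. \<forall>y'\<in>Y. of_nat d * (fin_val (f y) - fin_val (f y')) \<in> Z))"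
proof (cases "\<forall>y\<in>Y. f y = PInf")
  case True
  then show ?thesis by simp
next
  case False
  then obtain \<alpha>0 \<alpha> where fy: "\<forall>y\<in>Y. f y = Fin (\<alpha>0 + (\<Sum>i\<in>K. of_rat (\<alpha> i) * fin_val (y ! i)))"
    using aff unfolding affine_on_def by blast
  obtain d where d: "d \<ge> 1" "\<forall>i\<in>K. of_nat d * (\<alpha> i) \<in> \<int>" using rat_common_denominator[OF fin] by blast
  have "\<forall>y\<in>Y. \<forall>y'\<in>Y. of_nat d * (fin_val (f y) - fin_val (f y')) \<in> Z"
  proof (intro ballI)
    fix y y' assume y: "y \<in> Y" and y': "y' \<in> Y"
    have "of_nat d * (fin_val (f y) - fin_val (f y')) =
       (\<Sum>i\<in>K. of_rat (of_nat d * \<alpha> i) * (fin_val (y ! i) - fin_val (y' ! i)))"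
      using fy y y' by (simp add: sum_subtractf[symmetric] sum_distrib_left of_rat_mult algebra_simps)
    also have "\<dots> \<in> Z"
    proof (rule Z_sum[OF fin])
      fix i assume i: "i \<in> K"
      obtain c where c: "of_nat d * \<alpha> i = of_int c" using d(2) i Ints_cases by metis
      have "fin_val (y ! i) - fin_val (y' ! i) \<in> Z" using Yf y y' i Z_diff by blast
      then show "of_rat (of_nat d * \<alpha> i) * (fin_val (y ! i) - fin_val (y' ! i)) \<in> Z"
        unfolding c of_rat_of_int_eq by (rule Z_of_int_mult)
    qed
    finally show "of_nat d * (fin_val (f y) - fin_val (f y')) \<in> Z" .
  qed
  moreover have "\<forall>y\<in>Y. \<exists>u. f y = Fin u" using fy by blast
  ultimately show ?thesis using d(1) by blast
qed

lemma largely_cont_limit: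
  assumes lc: "largely_cont Z k Y f" and Y: "Y \<subseteq> gam_tuples k" and x: "x \<in> clos Z k Y"
  shows "\<exists>g\<in>omg Z. \<forall>T. basic_open Z T \<longrightarrow> g \<in> T \<longrightarrow>
           (\<exists>W. is_box k x W \<and> (\<forall>y\<in>Y. in_box k W y \<longrightarrow> f y \<in> T))"
proof -
  obtain G where G1: "\<forall>y\<in>Y. G y = f y" and G2: "\<forall>x\<in>clos Z k Y. G x \<in> omg Z"
    and G3: "\<forall>x\<in>clos Z k Y. \<forall>S. basic_open Z S \<and> G x \<in> S \<longrightarrow>
           (\<exists>Ss. basic_nbhd Z k x Ss \<and> (\<forall>y\<in>clos Z k Y. (\<forall>i<k. y ! i \<in> Ss ! i) \<longrightarrow> G y \<in> S))"
    using lc unfolding largely_cont_def by blast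
  have sub: "Y \<subseteq> clos Z k Y" using subset_clos_gam_tuples[OF Y] .
  show ?thesis
  proof (intro bexI[of _ "G x"] allI impI)
    show "G x \<in> omg Z" using G2 x by blast
    fix T assume T: "basic_open Z T" "G x \<in> T"
    then obtain Ss where Ss: "basic_nbhd Z k x Ss"
        "\<forall>y\<in>clos Z k Y. (\<forall>i<k. y ! i \<in> Ss ! i) \<longrightarrow> G y \<in> T"
      using G3 x by blast
    have "is_box k x (\<lambda>i. Ss ! i)" using Ss(1) unfolding is_box_def basic_nbhd_def by blast
    moreover have "\<forall>y\<in>Y. in_box k (\<lambda>i. Ss ! i) y \<longrightarrow> f y \<in> T"
    proof (intro ballI impI)
      fix y assume y: "y \<in> Y" "in_box k (\<lambda>i. Ss ! i) y"
      have "G y \<in> T" using Ss(2) sub y unfolding in_box_def by blast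
      then show "f y \<in> T" using G1 y(1) by simp
    qed
    ultimately show "\<exists>W. is_box k x W \<and> (\<forall>y\<in>Y. in_box k W y \<longrightarrow> f y \<in> T)" by blast
  qed
qed

lemma close_eq_if_mult_diff_in_Z:
  assumes d: "d \<ge> 1" and u: "Fin u \<in> ival (\<gamma> - 1 / of_nat (2 * d)) (\<gamma> + 1 / of_nat (2 * d))"
    and u': "Fin u' \<in> ival (\<gamma> - 1 / of_nat (2 * d)) (\<gamma> + 1 / of_nat (2 * d))"
    and Z: "of_nat d * (u - u') \<in> Z"
  shows "u = u'"
proof -
  have dpos: "(0::'k) < of_nat d" using d by simp
  have lt: "\<bar>u - u'\<bar> < 2 * (1 / of_nat (2 * d))"
    using u u' unfolding ival_def by (simp add: abs_less_iff)
  have "\<bar>of_nat d * (u - u')\<bar> = of_nat d * \<bar>u - u'\<bar>" by (simp add: abs_mult)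
  also have "\<dots> < of_nat d * (2 * (1 / of_nat (2 * d)))" using mult_strict_left_mono[OF lt dpos] .
  also have "\<dots> = 1" using d by simp
  finally have "of_nat d * (u - u') = 0" using Z_abs_less_one Z by blast
  then show "u = u'" using dpos by simp
qed

lemma affine_locally_stable:
  assumes aff: "affine_on Z K Y f" and fin: "finite K"
    and Yf: "\<forall>y\<in>Y. \<forall>i\<in>K. fin_val (y ! i) \<in> Z"
    and lc: "largely_cont Z k Y f" and Y: "Y \<subseteq> gam_tuples k" and x: "x \<in> clos Z k Y"
    and c: "c \<in> divhull Z"
  shows "\<exists>W. is_box k x W \<and> (\<forall>y\<in>Y. \<forall>y'\<in>Y. in_box k W y \<longrightarrow> in_box k W y' \<longrightarrow>
             (f y = f y' \<or> (Fin c < f y \<and> Fin c < f y')))"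
proof -
  obtain g where g: "g \<in> omg Z" and gT: "\<And>T. basic_open Z T \<Longrightarrow> g \<in> T \<Longrightarrow>
           (\<exists>W. is_box k x W \<and> (\<forall>y\<in>Y. in_box k W y \<longrightarrow> f y \<in> T))"
    using largely_cont_limit[OF lc Y x] by blast
  show ?thesis
  proof (cases g)
    case PInf
    obtain W where W: "is_box k x W" "\<forall>y\<in>Y. in_box k W y \<longrightarrow> f y \<in> ray c"
      using gT[OF ray_open[OF c]] PInf PInf_in_ray by blast
    show ?thesis
      by (rule exI[of _ W]) (use W in \<open>auto simp: ray_def\<close>)
  next
    case (Fin \<gamma>)
    have \<gamma>: "\<gamma> \<in> divhull Z" using g Fin by simp
    from affine_on_discrete[OF aff fin Yf] show ?thesis
    proof (elim disjE exE conjE)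
      assume "\<forall>y\<in>Y. f y = PInf"
      then show ?thesis
        by (intro exI[of _ "\<lambda>i. std_nbhd (x ! i)"] conjI) (auto simp: is_box_def std_nbhd_open clos_nth_omg[OF x])
    next
      fix d :: nat assume d: "d \<ge> 1" and fu: "\<forall>y\<in>Y. \<exists>u. f y = Fin u"
        and fd: "\<forall>y\<in>Y. \<forall>y'\<in>Y. of_nat d * (fin_val (f y) - fin_val (f y')) \<in> Z"
      define e :: 'k where "e = 1 / of_nat (2 * d)"
      have e: "e \<in> divhull Z" unfolding e_def by (rule divhull_inverse_nat) (use d in simp)
      have epos: "0 < e" unfolding e_def using d by simp
      have T: "basic_open Z (ival (\<gamma> - e) (\<gamma> + e))"
        by (rule ival_open[OF divhull_diff[OF \<gamma> e] divhull_add[OF \<gamma> e]])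
      have gT': "g \<in> ival (\<gamma> - e) (\<gamma> + e)" unfolding Fin using epos \<gamma> by (intro Fin_in_ival) auto
      obtain W where W: "is_box k x W" "\<forall>y\<in>Y. in_box k W y \<longrightarrow> f y \<in> ival (\<gamma> - e) (\<gamma> + e)"
        using gT[OF T gT'] by blast
      have "\<forall>y\<in>Y. \<forall>y'\<in>Y. in_box k W y \<longrightarrow> in_box k W y' \<longrightarrow> f y = f y'"
      proof (intro ballI impI)
        fix y y' assume y: "y \<in> Y" and y': "y' \<in> Y" and w: "in_box k W y" "in_box k W y'"
        obtain u u' where u: "f y = Fin u" "f y' = Fin u'" using fu y y' by blast
        have "Fin u \<in> ival (\<gamma> - e) (\<gamma> + e)" "Fin u' \<in> ival (\<gamma> - e) (\<gamma> + e)"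
          using W(2) y y' w u by metis+
        moreover have "of_nat d * (u - u') \<in> Z" using fd y y' u by fastforce
        ultimately show "f y = f y'" using close_eq_if_mult_diff_in_Z[OF d] u unfolding e_def by simp
      qed
      then show ?thesis using W(1) by blast
    qed
  qed
qed

lemma largely_cont_omg: "largely_cont Z k Y f \<Longrightarrow> Y \<subseteq> gam_tuples k \<Longrightarrow> y \<in> Y \<Longrightarrow> f y \<in> omg Z"
proof -
  assume lc: "largely_cont Z k Y f" and Y: "Y \<subseteq> gam_tuples k" and y: "y \<in> Y"
  obtain G where G1: "\<forall>y\<in>Y. G y = f y" and G2: "\<forall>x\<in>clos Z k Y. G x \<in> omg Z"
    using lc unfolding largely_cont_def by blast
  have "y \<in> clos Z k Y" using subset_clos_gam_tuples[OF Y] y by blast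
  then show ?thesis using G1 G2 y by metis
qed

end

section \<open>Truncations of a precell\<close>

locale precell = z_group Z for Z :: "'k::linordered_field set" +
  fixes N :: "nat list" and m :: nat and I :: "nat set" and A :: "'k ext list set"
  assumes lenN: "length N = m" and posN: "\<forall>k\<in>set N. k > 0" and I_subset: "I \<subseteq> {0..<m}"
    and A_Fgam: "A \<subseteq> Fgam Z m I" and A_levelwise: "levelwise N A"
begin

definition trunc :: "nat \<Rightarrow> 'k ext list set" where "trunc k = take k ` A"

lemma A_length: "a \<in> A \<Longrightarrow> length a = m" using A_Fgam unfolding Fgam_def by auto
lemma A_gam_tuples: "A \<subseteq> gam_tuples m" using A_Fgam Fgam_subset_gam_tuples by blast
lemma trunc_full: "trunc m = A" unfolding trunc_def by (rule image_eq_self) (simp add: A_length)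
lemma A_nonempty: "A \<noteq> {}" using A_levelwise unfolding levelwise_def by simp

lemma trunc_Fgam: assumes k: "k \<le> m" shows "trunc k \<subseteq> Fgam Z k {i \<in> I. i < k}"
proof
  fix y assume "y \<in> trunc k"
  then obtain a where a: "a \<in> A" "y = take k a" unfolding trunc_def by blast
  have "a \<in> Fgam Z m I" using a(1) A_Fgam by blast
  then show "y \<in> Fgam Z k {i \<in> I. i < k}" using take_Fgam[OF _ k] a(2) by blast
qed

lemma trunc_length: "k \<le> m \<Longrightarrow> y \<in> trunc k \<Longrightarrow> length y = k"
  using trunc_Fgam unfolding Fgam_def by blast

lemma trunc_gam_tuples: "k \<le> m \<Longrightarrow> trunc k \<subseteq> gam_tuples k" using trunc_Fgam Fgam_subset_gam_tuples by blast

lemma trunc_fin_val_Z: assumes k: "k \<le> m" shows "\<forall>y\<in>trunc k. \<forall>i\<in>{i \<in> I. i < k}. fin_val (y ! i) \<in> Z"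
proof (intro ballI)
  fix y i assume y: "y \<in> trunc k" and i: "i \<in> {i \<in> I. i < k}"
  have "y \<in> Fgam Z k {i \<in> I. i < k}" using trunc_Fgam[OF k] y by blast
  then obtain z where "z \<in> Z" "y ! i = Fin z" using Fgam_nth_in[of y k "{i \<in> I. i < k}" i] i by auto
  then show "fin_val (y ! i) \<in> Z" by simp
qed

lemma N_pos: "k < m \<Longrightarrow> N ! k \<ge> 1"
  using posN lenN nth_mem[of k N] by (simp add: Suc_le_eq)

lemma butlast_trunc: assumes k: "k < m" and y: "y \<in> trunc (Suc k)" shows "butlast y \<in> trunc k"
proof -
  obtain a where a: "a \<in> A" "y = take (Suc k) a" using y unfolding trunc_def by blast
  have "butlast y = take k a" using a A_length[OF a(1)] k by (simp add: butlast_take)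
  then show ?thesis using a(1) unfolding trunc_def by blast
qed

lemma trunc_extend: assumes k: "k < m" and y: "y \<in> trunc k" shows "\<exists>a\<in>trunc (Suc k). butlast a = y"
proof -
  obtain a where a: "a \<in> A" "y = take k a" using y unfolding trunc_def by blast
  have "butlast (take (Suc k) a) = y" using a A_length[OF a(1)] k by (simp add: butlast_take)
  moreover have "take (Suc k) a \<in> trunc (Suc k)" using a(1) unfolding trunc_def by blast
  ultimately show ?thesis by blast
qed

lemma take_in_trunc: "a \<in> A \<Longrightarrow> take k a \<in> trunc k" unfolding trunc_def by blast

lemma level_trunc: assumes k: "k < m" shows "level (N ! k) k {i \<in> I. i < Suc k} (trunc k) (trunc (Suc k))"
proof -
  have "level_at N A k" using A_levelwise k lenN unfolding levelwise_def by simp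
  then obtain I' where I1: "take (Suc k) ` A \<subseteq> Fgam Z (Suc k) I'"
      and I2: "level (N ! k) k I' (take k ` A) (take (Suc k) ` A)"
    unfolding level_at_def by blast
  obtain a where a: "a \<in> A" using A_nonempty by blast
  have "take (Suc k) a \<in> Fgam Z (Suc k) I'" using I1 a by blast
  moreover have "take (Suc k) a \<in> Fgam Z (Suc k) {i \<in> I. i < Suc k}"
    using take_Fgam[of a m I "Suc k"] a A_Fgam k by auto
  ultimately have "I' = {i \<in> I. i < Suc k}" by (rule Fgam_unique)
  then show ?thesis using I2 unfolding trunc_def by simp
qed

lemma level_trunc_data:
  assumes k: "k < m"
  obtains \<mu> \<nu> \<rho> where "affine_on Z {i \<in> I. i < k} (trunc k) \<mu>" "affine_on Z {i \<in> I. i < k} (trunc k) \<nu>"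
    "largely_cont Z k (trunc k) \<mu>" "largely_cont Z k (trunc k) \<nu>" "\<rho> < N ! k"
    "\<And>a. a \<in> trunc (Suc k) \<longleftrightarrow> (a \<in> Fgam Z (Suc k) {i \<in> I. i < Suc k} \<and> butlast a \<in> trunc k \<and>
        \<mu> (butlast a) \<le> a ! k \<and> a ! k \<le> \<nu> (butlast a) \<and> cong_ext Z (N ! k) (a ! k) (Fin (of_nat \<rho>)))"
proof -
  have e: "{i \<in> {i \<in> I. i < Suc k}. i < k} = {i \<in> I. i < k}" by auto
  show ?thesis using level_trunc[OF k] that unfolding level_def e by blast
qed

lemma Fgam_snoc:
  assumes y: "y \<in> Fgam Z k {i \<in> I. i < k}" and v: "v \<in> gam Z" and vI: "v \<noteq> PInf \<longleftrightarrow> k \<in> I"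
  shows "y @ [v] \<in> Fgam Z (Suc k) {i \<in> I. i < Suc k}"
proof -
  have ly: "length y = k" and sy: "set y \<subseteq> gam Z" and Iy: "{i. i < k \<and> y ! i \<noteq> PInf} = {i \<in> I. i < k}"
    using y unfolding Fgam_def by auto
  have "{i. i < Suc k \<and> (y @ [v]) ! i \<noteq> PInf} = {i \<in> I. i < Suc k}"
  proof (rule set_eqI)
    fix i
    show "i \<in> {i. i < Suc k \<and> (y @ [v]) ! i \<noteq> PInf} \<longleftrightarrow> i \<in> {i \<in> I. i < Suc k}"
    proof (cases "i < k")
      case True
      then have "(y @ [v]) ! i = y ! i" using ly by (simp add: nth_append)
      then show ?thesis using True Iy by auto
    next
      case False
      show ?thesis
      proof (cases "i = k")
        case True
        then have "(y @ [v]) ! i = v" using ly nth_append_length[of y v "[]"] by simp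
        then show ?thesis using True vI by auto
      next
        case False
        then show ?thesis using \<open>\<not> i < k\<close> by auto
      qed
    qed
  qed
  moreover have "length (y @ [v]) = Suc k" using ly by simp
  moreover have "set (y @ [v]) \<subseteq> gam Z" using sy v by simp
  ultimately show ?thesis unfolding Fgam_def by blast
qed

lemma butlast_nth_snoc: "length y = k \<Longrightarrow> butlast (y @ [v]) = y \<and> (y @ [v]) ! k = v"
  using nth_append_length[of y v "[]"] by simp

lemma take_Suc_bounds:
  assumes k: "k < m" and a: "a \<in> A"
    and memb: "\<And>a. a \<in> trunc (Suc k) \<longleftrightarrow> (a \<in> Fgam Z (Suc k) {i \<in> I. i < Suc k} \<and> butlast a \<in> trunc k \<and>
        \<mu> (butlast a) \<le> a ! k \<and> a ! k \<le> \<nu> (butlast a) \<and> cong_ext Z (N ! k) (a ! k) (Fin (of_nat \<rho>)))"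
  shows "\<mu> (take k a) \<le> a ! k \<and> a ! k \<le> \<nu> (take k a) \<and> cong_ext Z (N ! k) (a ! k) (Fin (of_nat \<rho>))"
proof -
  have "take (Suc k) a \<in> trunc (Suc k)" using take_in_trunc[OF a] .
  moreover have "butlast (take (Suc k) a) = take k a" using A_length[OF a] k by (simp add: butlast_take)
  moreover have "take (Suc k) a ! k = a ! k" by simp
  ultimately show ?thesis using memb by metis
qed

text \<open>Near a point \<open>b\<close> of \<open>\<overline>A\<close> whose \<open>k\<close>-th coordinate is \<open>+\<infinity>\<close>, the upper bound of \<open>A\<close> in
  direction \<open>k\<close> becomes arbitrarily large, since it dominates the \<open>k\<close>-th coordinates of points
  of \<open>A\<close> close to \<open>b\<close>.\<close>

lemma upper_bound_large_near:
  assumes b: "b \<in> clos Z m A" and k: "k < m" and bk: "b ! k = PInf"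
    and lc: "largely_cont Z k (trunc k) \<nu>" and bound: "\<And>a. a \<in> A \<Longrightarrow> a ! k \<le> \<nu> (take k a)"
    and c: "c \<in> divhull Z"
  shows "\<exists>V. is_box k (take k b) V \<and> (\<forall>y\<in>trunc k. in_box k V y \<longrightarrow> Fin c < \<nu> y)"
proof -
  have Dk: "trunc k \<subseteq> gam_tuples k" using trunc_gam_tuples k by simp
  have bk_clos: "take k b \<in> clos Z k (trunc k)" unfolding trunc_def using take_clos[OF b] k by simp
  obtain g where g: "g \<in> omg Z" and gT: "\<And>T. basic_open Z T \<Longrightarrow> g \<in> T \<Longrightarrow>
      (\<exists>V. is_box k (take k b) V \<and> (\<forall>y\<in>trunc k. in_box k V y \<longrightarrow> \<nu> y \<in> T))"
    using largely_cont_limit[OF lc Dk bk_clos] by blast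
  have "g = PInf"
  proof (rule ccontr)
    assume "g \<noteq> PInf"
    then obtain h where h: "g = Fin h" by (cases g) auto
    have hd: "h \<in> divhull Z" using g h by simp
    have o1: "1 \<in> divhull Z" using Z_divhull[OF Z_one] .
    have T: "basic_open Z (ival (h - 1) (h + 1))"
      by (rule ival_open[OF divhull_diff[OF hd o1] divhull_add[OF hd o1]])
    have "g \<in> ival (h - 1) (h + 1)" unfolding h using hd by (intro Fin_in_ival) auto
    then obtain V where V: "is_box k (take k b) V"
        "\<forall>y\<in>trunc k. in_box k V y \<longrightarrow> \<nu> y \<in> ival (h - 1) (h + 1)"
      using gT[OF T] by blast
    define V' where "V' i = (if i < k then V i else ray (h + 1))" for i
    have "is_box (Suc k) b V'"
      using V(1) ray_open[OF divhull_add[OF hd o1]] PInf_in_ray bk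
      unfolding is_box_def V'_def by (auto simp: less_Suc_eq)
    then obtain a where a: "a \<in> A" "in_box (Suc k) V' a"
      using clos_exact_approx[OF A_gam_tuples b Suc_leI[OF k]] by blast
    have "in_box k V (take k a)" unfolding in_box_def
    proof (intro allI impI)
      fix i assume i: "i < k"
      then have "a ! i \<in> V' i" using a(2) unfolding in_box_def by simp
      then show "take k a ! i \<in> V i" using i unfolding V'_def by simp
    qed
    then have "\<nu> (take k a) < Fin (h + 1)"
      using V(2) take_in_trunc[OF a(1)] unfolding ival_def by auto
    moreover have "Fin (h + 1) < a ! k" using a(2) unfolding in_box_def V'_def ray_def by auto
    ultimately show False using bound[OF a(1)] by auto
  qed
  then have "g \<in> ray c" using PInf_in_ray by simp
  then obtain V where "is_box k (take k b) V" "\<forall>y\<in>trunc k. in_box k V y \<longrightarrow> \<nu> y \<in> ray c"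
    using gT[OF ray_open[OF c]] by blast
  then show ?thesis unfolding ray_def by auto
qed

end

section \<open>Approaching a boundary point from inside the precell\<close>

context precell begin

definition unbounded_fibres where
  "unbounded_fibres j C \<longleftrightarrow> (\<forall>p\<in>trunc j. \<forall>c\<in>divhull Z.
     \<exists>x\<in>Z. c < x \<and> p @ [Fin x] \<in> trunc (Suc j) \<and> C (Fin x))"

end

locale approach = precell +
  fixes K :: "nat set" and b and j :: nat
  assumes bcl: "b \<in> clos Z m A" and bK: "b \<in> Fgam Z m K" and KI: "K \<subseteq> I"
    and jI: "j \<in> I" and jK: "j \<notin> K" and jmin: "\<forall>i<j. i \<in> I \<longrightarrow> i \<in> K"
begin

lemma j_less_m: "j < m" using jI I_subset by auto

lemma b_length: "length b = m" using bK unfolding Fgam_def by auto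

lemma approach_prefix:
  assumes T: "basic_open Z T" "PInf \<in> T"
  shows "\<exists>a\<in>A. take j a = take j b \<and> a ! j \<in> T"
proof -
  define T' where "T' i = (if i = j then T else std_nbhd (b ! i))" for i
  have "is_box (Suc j) b T'" unfolding is_box_def T'_def
    using T std_nbhd_open clos_nth_omg[OF bcl] Fgam_nth_notin[OF bK j_less_m jK] j_less_m by auto
  then obtain a where a: "a \<in> A" "in_box (Suc j) T' a" "\<forall>i<m. b ! i \<noteq> PInf \<longrightarrow> a ! i = b ! i"
    using clos_exact_approx[OF A_gam_tuples bcl Suc_leI[OF j_less_m]] by blast
  have "take j a = take j b"
  proof (rule nth_equalityI)
    show "length (take j a) = length (take j b)" using A_length[OF a(1)] b_length by simp
    fix i assume i: "i < length (take j a)"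
    then have ij: "i < j" and im: "i < m" using A_length[OF a(1)] j_less_m by auto
    show "take j a ! i = take j b ! i"
    proof (cases "b ! i = PInf")
      case True
      then have "i \<notin> I" using bK im jmin ij unfolding Fgam_def by auto
      then have "a ! i = PInf" using Fgam_nth_notin[of a m I i] a(1) A_Fgam im by blast
      then show ?thesis using True ij by simp
    next
      case False
      then show ?thesis using a(3) im ij by simp
    qed
  qed
  moreover have "a ! j \<in> T" using a(2) unfolding in_box_def T'_def by auto
  ultimately show ?thesis using a(1) by blast
qed

lemma take_b_trunc: "take j b \<in> trunc j"
proof -
  obtain a where "a \<in> A" "take j a = take j b"
    using approach_prefix[OF ray_open[OF Z_divhull[OF Z_zero]] PInf_in_ray] by blast
  then show ?thesis using take_in_trunc by metis
qed

definition approachable where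
  "approachable k C \<longleftrightarrow> (\<forall>W. is_box k b W \<longrightarrow> (\<exists>y\<in>trunc k. C (y ! j) \<and> in_box k W y))"

lemma approachable_Suc_j:
  assumes "unbounded_fibres j C"
  shows "approachable (Suc j) C"
  unfolding approachable_def
proof (intro allI impI)
  fix W assume W: "is_box (Suc j) b W"
  have "basic_open Z (W j)" "PInf \<in> W j"
    using W Fgam_nth_notin[OF bK j_less_m jK] unfolding is_box_def by auto
  then obtain c where c: "c \<in> divhull Z" "ray c \<subseteq> W j" using basic_open_PInf_ray by blast
  obtain x where x: "x \<in> Z" "c < x" "take j b @ [Fin x] \<in> trunc (Suc j)" "C (Fin x)"
    using assms take_b_trunc c(1) unfolding unbounded_fibres_def by blast
  have len: "length (take j b) = j" using b_length j_less_m by simp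
  have "Fin x \<in> W j" using c(2) x(1,2) Z_divhull unfolding ray_def by auto
  moreover have "in_box j W (take j b)"
    using W unfolding in_box_take is_box_def in_box_def by auto
  ultimately have "in_box (Suc j) W (take j b @ [Fin x])" by (rule in_box_snoc[OF len, rotated])
  then show "\<exists>y\<in>trunc (Suc j). C (y ! j) \<and> in_box (Suc j) W y"
    using x(3,4) nth_append_length[of "take j b" "Fin x" "[]"] len
    by (intro bexI[of _ "take j b @ [Fin x]"]) auto
qed

lemma approachable_Suc_notin:
  assumes n: "j < n" "n < m" "n \<notin> I" and IH: "approachable n C"
  shows "approachable (Suc n) C"
  unfolding approachable_def
proof (intro allI impI)
  fix W assume W: "is_box (Suc n) b W"
  obtain y where y: "y \<in> trunc n" "C (y ! j)" "in_box n W y"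
    using IH is_box_Suc[OF W] unfolding approachable_def by blast
  obtain a where a: "a \<in> trunc (Suc n)" "butlast a = y" using trunc_extend[OF n(2) y(1)] by blast
  have "Suc n \<le> m" using n(2) by simp
  then have aF: "a \<in> Fgam Z (Suc n) {i \<in> I. i < Suc n}" using trunc_Fgam a(1) by blast
  have la: "length a = Suc n" using aF unfolding Fgam_def by simp
  have an: "a ! n = PInf" using Fgam_nth_notin[OF aF] n(3) by simp
  have ne: "a \<noteq> []" using la by auto
  have "butlast a @ [last a] = a" using ne by (rule append_butlast_last_id)
  moreover have "last a = a ! n" using ne la by (simp add: last_conv_nth)
  ultimately have ay: "a = y @ [PInf]" using a(2) an by simp
  have ly: "length y = n" using trunc_length y(1) n(2) by simp
  have "b ! n = PInf" using Fgam_nth_notin[OF bK n(2)] n(3) KI by blast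
  then have "PInf \<in> W n" using W unfolding is_box_def by (metis lessI)
  then have "in_box (Suc n) W a" unfolding ay using in_box_snoc[OF ly y(3)] by simp
  moreover have "C (a ! j)" unfolding ay using y(2) n(1) ly by (simp add: nth_append_left)
  ultimately show "\<exists>y\<in>trunc (Suc n). C (y ! j) \<and> in_box (Suc n) W y" using a(1) by blast
qed

lemma approachable_Suc_fixed:
  assumes n: "j < n" "n < m" "n \<in> K" and IH: "approachable n C"
  shows "approachable (Suc n) C"
  unfolding approachable_def
proof (intro allI impI)
  fix W assume W: "is_box (Suc n) b W"
  obtain \<mu> \<nu> \<rho> where h1: "affine_on Z {i \<in> I. i < n} (trunc n) \<mu>"
    and h2: "affine_on Z {i \<in> I. i < n} (trunc n) \<nu>"
    and h3: "largely_cont Z n (trunc n) \<mu>" and h4: "largely_cont Z n (trunc n) \<nu>" and "\<rho> < N ! n"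
    and memb: "\<And>a. a \<in> trunc (Suc n) \<longleftrightarrow> (a \<in> Fgam Z (Suc n) {i \<in> I. i < Suc n} \<and> butlast a \<in> trunc n \<and>
        \<mu> (butlast a) \<le> a ! n \<and> a ! n \<le> \<nu> (butlast a) \<and> cong_ext Z (N ! n) (a ! n) (Fin (of_nat \<rho>)))"
    using level_trunc_data[OF n(2)] by blast
  obtain v where v: "v \<in> Z" "b ! n = Fin v" using Fgam_nth_in[OF bK n(2,3)] by blast
  have Dn: "trunc n \<subseteq> gam_tuples n" "\<forall>y\<in>trunc n. \<forall>i\<in>{i \<in> I. i < n}. fin_val (y ! i) \<in> Z"
    using trunc_gam_tuples[of n] trunc_fin_val_Z[of n] n(2) by auto
  have bn: "take n b \<in> clos Z n (trunc n)" unfolding trunc_def using take_clos[OF bcl] n(2) by simp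
  obtain W1 where W1: "is_box n (take n b) W1" and s1: "\<forall>y\<in>trunc n. \<forall>y'\<in>trunc n.
      in_box n W1 y \<longrightarrow> in_box n W1 y' \<longrightarrow> \<mu> y = \<mu> y' \<or> (Fin v < \<mu> y \<and> Fin v < \<mu> y')"
    using affine_locally_stable[OF h1 _ Dn(2) h3 Dn(1) bn Z_divhull[OF v(1)]] by auto
  obtain W2 where W2: "is_box n (take n b) W2" and s2: "\<forall>y\<in>trunc n. \<forall>y'\<in>trunc n.
      in_box n W2 y \<longrightarrow> in_box n W2 y' \<longrightarrow> \<nu> y = \<nu> y' \<or> (Fin v < \<nu> y \<and> Fin v < \<nu> y')"
    using affine_locally_stable[OF h2 _ Dn(2) h4 Dn(1) bn Z_divhull[OF v(1)]] by auto
  define W' where "W' i = W i \<inter> (W1 i \<inter> W2 i)" for i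
  have W': "is_box n b W'"
    unfolding W'_def by (intro is_box_Int is_box_Suc[OF W] is_box_take[OF W1] is_box_take[OF W2])
  define T where "T i = (if i < n then W' i else W n)" for i
  have "is_box (Suc n) b T" using W' W unfolding T_def is_box_def by (auto simp: less_Suc_eq)
  then obtain a where a: "a \<in> A" "in_box (Suc n) T a" "\<forall>i<m. b ! i \<noteq> PInf \<longrightarrow> a ! i = b ! i"
    using clos_exact_approx[OF A_gam_tuples bcl Suc_leI[OF n(2)]] by blast
  have an: "a ! n = Fin v" using a(3) n(2) v(2) by auto
  have "in_box n W' (take n a)" unfolding in_box_def
  proof (intro allI impI)
    fix i assume i: "i < n"
    then have "a ! i \<in> T i" using a(2) unfolding in_box_def by simp
    then show "take n a ! i \<in> W' i" using i unfolding T_def by simp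
  qed
  then have aW: "in_box n W1 (take n a)" "in_box n W2 (take n a)"
    unfolding W'_def in_box_def by auto
  have ta: "take n a \<in> trunc n" using take_in_trunc[OF a(1)] .
  have am: "\<mu> (take n a) \<le> Fin v" "Fin v \<le> \<nu> (take n a)" "cong_ext Z (N ! n) (Fin v) (Fin (of_nat \<rho>))"
    using take_Suc_bounds[OF n(2) a(1) memb] an by auto
  obtain y where y: "y \<in> trunc n" "C (y ! j)" "in_box n W' y"
    using IH W' unfolding approachable_def by blast
  have yW: "in_box n W y" "in_box n W1 y" "in_box n W2 y" using y(3) unfolding W'_def in_box_def by auto
  have "\<mu> y = \<mu> (take n a) \<or> (Fin v < \<mu> y \<and> Fin v < \<mu> (take n a))"
    using s1 y(1) ta yW(2) aW(1) by blast
  then have "\<mu> y \<le> Fin v" using am(1) by auto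
  moreover have "\<nu> y = \<nu> (take n a) \<or> (Fin v < \<nu> y \<and> Fin v < \<nu> (take n a))"
    using s2 y(1) ta yW(3) aW(2) by blast
  then have "Fin v \<le> \<nu> y" using am(2) by auto
  moreover have ly: "length y = n" using trunc_length y(1) n(2) by simp
  moreover have "y \<in> Fgam Z n {i \<in> I. i < n}" using trunc_Fgam[of n] n(2) y(1) by auto
  then have "y @ [Fin v] \<in> Fgam Z (Suc n) {i \<in> I. i < Suc n}"
    by (rule Fgam_snoc) (use v n(3) KI in auto)
  ultimately have "y @ [Fin v] \<in> trunc (Suc n)" using memb y(1) am(3) butlast_nth_snoc[OF ly] by simp
  moreover have "Fin v \<in> W n" using W v(2) unfolding is_box_def by (metis lessI)
  then have "in_box (Suc n) W (y @ [Fin v])" by (rule in_box_snoc[OF ly yW(1)])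
  moreover have "C ((y @ [Fin v]) ! j)" using y(2) n(1) ly by (simp add: nth_append_left)
  ultimately show "\<exists>y\<in>trunc (Suc n). C (y ! j) \<and> in_box (Suc n) W y" by blast
qed

lemma approachable_Suc_free:
  assumes n: "j < n" "n < m" "n \<in> I" "n \<notin> K" and IH: "approachable n C"
  shows "approachable (Suc n) C"
  unfolding approachable_def
proof (intro allI impI)
  fix W assume W: "is_box (Suc n) b W"
  obtain \<mu> \<nu> \<rho> where "affine_on Z {i \<in> I. i < n} (trunc n) \<mu>"
    and "affine_on Z {i \<in> I. i < n} (trunc n) \<nu>"
    and "largely_cont Z n (trunc n) \<mu>" and h4: "largely_cont Z n (trunc n) \<nu>" and "\<rho> < N ! n"
    and memb: "\<And>a. a \<in> trunc (Suc n) \<longleftrightarrow> (a \<in> Fgam Z (Suc n) {i \<in> I. i < Suc n} \<and> butlast a \<in> trunc n \<and>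
        \<mu> (butlast a) \<le> a ! n \<and> a ! n \<le> \<nu> (butlast a) \<and> cong_ext Z (N ! n) (a ! n) (Fin (of_nat \<rho>)))"
    using level_trunc_data[OF n(2)] by blast
  have bn: "b ! n = PInf" using Fgam_nth_notin[OF bK n(2,4)] .
  obtain c where c: "c \<in> divhull Z" "ray c \<subseteq> W n"
    using basic_open_PInf_ray W bn unfolding is_box_def by (metis lessI)
  have cN: "c + of_nat (N ! n) \<in> divhull Z" using divhull_add[OF c(1) Z_divhull[OF Z_of_nat]] .
  obtain V where V: "is_box n (take n b) V" "\<forall>y\<in>trunc n. in_box n V y \<longrightarrow> Fin (c + of_nat (N ! n)) < \<nu> y"
    using upper_bound_large_near[OF bcl n(2) bn h4 _ cN] take_Suc_bounds[OF n(2) _ memb] by blast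
  obtain y where y: "y \<in> trunc n" "C (y ! j)" "in_box n (\<lambda>i. W i \<inter> V i) y"
    using IH is_box_Int[OF is_box_Suc[OF W] is_box_take[OF V(1)]] unfolding approachable_def by blast
  have yW: "in_box n W y" "in_box n V y" using y(3) unfolding in_box_def by auto
  obtain a0 where a0: "a0 \<in> trunc (Suc n)" "butlast a0 = y" using trunc_extend[OF n(2) y(1)] by blast
  have a0F: "a0 \<in> Fgam Z (Suc n) {i \<in> I. i < Suc n}" using memb a0(1) by blast
  obtain z where z: "z \<in> Z" "a0 ! n = Fin z" using Fgam_nth_in[OF a0F] n(3) by auto
  have a0m: "\<mu> y \<le> Fin z" "Fin z \<le> \<nu> y" "cong_ext Z (N ! n) (Fin z) (Fin (of_nat \<rho>))"
    using memb a0 z(2) by auto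
  obtain x where x: "x \<in> Z" "c < x" "z \<le> x" "Fin x \<le> \<nu> y" "x - z \<in> nmult Z (N ! n)"
    using congruent_in_gap[OF z(1) c(1) N_pos[OF n(2)] a0m(2)] V(2) y(1) yW(2) by blast
  have "z - of_nat \<rho> \<in> nmult Z (N ! n)" using a0m(3) by simp
  with x(5) have "(x - z) + (z - of_nat \<rho>) \<in> nmult Z (N ! n)" by (rule nmult_add)
  then have "cong_ext Z (N ! n) (Fin x) (Fin (of_nat \<rho>))" by simp
  moreover have "\<mu> y \<le> Fin x" using a0m(1) x(3) order_trans by fastforce
  moreover have ly: "length y = n" using trunc_length y(1) n(2) by simp
  moreover have "y \<in> Fgam Z n {i \<in> I. i < n}" using trunc_Fgam[of n] n(2) y(1) by auto
  then have "y @ [Fin x] \<in> Fgam Z (Suc n) {i \<in> I. i < Suc n}"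
    by (rule Fgam_snoc) (use x(1) n(3) in auto)
  ultimately have "y @ [Fin x] \<in> trunc (Suc n)" using memb y(1) x(4) butlast_nth_snoc[OF ly] by simp
  moreover have "Fin x \<in> W n" using c(2) x(1,2) Z_divhull unfolding ray_def by auto
  then have "in_box (Suc n) W (y @ [Fin x])" by (rule in_box_snoc[OF ly yW(1)])
  moreover have "C ((y @ [Fin x]) ! j)" using y(2) n(1) ly by (simp add: nth_append_left)
  ultimately show "\<exists>y\<in>trunc (Suc n). C (y ! j) \<and> in_box (Suc n) W y" by blast
qed

lemma approachable_Suc:
  assumes "j < n" "n < m" "approachable n C"
  shows "approachable (Suc n) C"
proof -
  consider "n \<notin> I" | "n \<in> K" | "n \<in> I" "n \<notin> K" using KI by blast
  then show ?thesis
  proof cases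
    case 1
    show ?thesis by (rule approachable_Suc_notin[OF assms(1,2) 1 assms(3)])
  next
    case 2
    show ?thesis by (rule approachable_Suc_fixed[OF assms(1,2) 2 assms(3)])
  next
    case 3
    show ?thesis by (rule approachable_Suc_free[OF assms(1,2) 3 assms(3)])
  qed
qed

lemma approach_clos:
  assumes "unbounded_fibres j C"
  shows "b \<in> clos Z m {a \<in> A. C (a ! j)}"
proof (rule closI)
  show "length b = m" "set b \<subseteq> omg Z" using clos_lengthD[OF bcl] by auto
  have approx: "approachable m C"
    using Suc_leI[OF j_less_m]
  proof (induction rule: dec_induct)
    case base
    show ?case using approachable_Suc_j[OF assms] .
  next
    case (step n)
    then show ?case using approachable_Suc[OF _ _ step.IH] by simp
  qed
  fix Ss assume "basic_nbhd Z m b Ss"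
  then have "is_box m b (\<lambda>i. Ss ! i)" unfolding is_box_def basic_nbhd_def by blast
  then obtain y where "y \<in> trunc m" "C (y ! j)" "in_box m (\<lambda>i. Ss ! i) y"
    using approx unfolding approachable_def by blast
  then show "\<exists>a\<in>{a \<in> A. C (a ! j)}. \<forall>i<m. a ! i \<in> Ss ! i"
    using trunc_full unfolding in_box_def by auto
qed

end

section \<open>The largest proper face\<close>

lemma finite_total_has_greatest:
  assumes "finite S" "S \<noteq> {}"
    and tot: "\<forall>x\<in>S. \<forall>y\<in>S. P x y \<or> P y x"
    and tr: "\<forall>x\<in>S. \<forall>y\<in>S. \<forall>z\<in>S. P x y \<longrightarrow> P y z \<longrightarrow> P x z"
  shows "\<exists>M\<in>S. \<forall>x\<in>S. P x M"
  using assms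
proof (induction S rule: finite_ne_induct)
  case (singleton x)
  have "P x x" using singleton.prems(1) by blast
  then show ?case by blast
next
  case (insert x F)
  have tot': "\<forall>x\<in>F. \<forall>y\<in>F. P x y \<or> P y x"
    using insert.prems(1) by (meson insertCI)
  have tr': "\<forall>x\<in>F. \<forall>y\<in>F. \<forall>z\<in>F. P x y \<longrightarrow> P y z \<longrightarrow> P x z"
    using insert.prems(2) by (meson insertCI)
  obtain M where M: "M \<in> F" "\<forall>y\<in>F. P y M" using insert.IH[OF tot' tr'] by blast
  show ?case
  proof (cases "P M x")
    case True
    have "\<forall>y\<in>insert x F. P y x"
    proof
      fix y assume y: "y \<in> insert x F"
      show "P y x"
      proof (cases "y = x")
        case True
        have "P x x" using insert.prems(1) by blast
        then show ?thesis using True by simp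
      next
        case False
        then have yF: "y \<in> F" using y by simp
        have "P y M" using M(2) yF by blast
        moreover have "P y M \<longrightarrow> P M x \<longrightarrow> P y x" using insert.prems(2) yF M(1) by blast
        ultimately show ?thesis using True by blast
      qed
    qed
    then show ?thesis by blast
  next
    case False
    then have "P x M" using insert.prems(1) M(1) by blast
    then have "\<forall>y\<in>insert x F. P y M" using M(2) by blast
    then show ?thesis using M(1) by blast
  qed
qed

lemma least_index_outside:
  fixes I K :: "nat set"
  assumes "K \<subseteq> I" "K \<noteq> I"
  obtains j where "j \<in> I - K" "\<forall>i<j. i \<in> I \<longrightarrow> i \<in> K"
proof -
  obtain j where "j \<in> I - K" "\<And>i. i < j \<Longrightarrow> i \<notin> I - K"
    using assms exists_least_iff[of "\<lambda>j. j \<in> I - K"] by blast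
  then show thesis using that by blast
qed

context z_group begin

lemma clos_inter_Fgam:
  assumes P: "P \<subseteq> Fgam Z m I"
  shows "clos Z m P \<inter> Fgam Z m I = P"
proof
  have PG: "P \<subseteq> gam_tuples m" using P Fgam_subset_gam_tuples by blast
  show "P \<subseteq> clos Z m P \<inter> Fgam Z m I" using subset_clos_gam_tuples[OF PG] P by blast
  show "clos Z m P \<inter> Fgam Z m I \<subseteq> P"
  proof
    fix x assume x: "x \<in> clos Z m P \<inter> Fgam Z m I"
    obtain a where a: "a \<in> P" "\<forall>i<m. x ! i \<noteq> PInf \<longrightarrow> a ! i = x ! i"
      using clos_exact_approx_finite[OF PG] x by blast
    have aF: "a \<in> Fgam Z m I" using a(1) P by blast
    have "a = x"
    proof (rule nth_equalityI)
      show "length a = length x" using aF x unfolding Fgam_def by simp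
      fix i assume "i < length a"
      then have i: "i < m" using aF unfolding Fgam_def by simp
      show "a ! i = x ! i"
      proof (cases "x ! i = PInf")
        case True
        then have "i \<notin> I" using x i unfolding Fgam_def by auto
        then show ?thesis using Fgam_nth_notin[OF aF i] True by simp
      next
        case False
        then show ?thesis using a(2) i by blast
      qed
    qed
    then show "x \<in> P" using a(1) by simp
  qed
qed

end

context precell begin

lemma face_full: "Fface Z m I A = A"
  unfolding Fface_def using clos_inter_Fgam[OF A_Fgam] .

lemma face_index_subset:
  assumes c: "c \<in> Fface Z m K A"
  shows "K \<subseteq> I"
proof
  fix i assume iK: "i \<in> K"
  have c': "c \<in> clos Z m A" "c \<in> Fgam Z m K" using c unfolding Fface_def by auto
  have i: "i < m" "c ! i \<noteq> PInf" using c'(2) iK unfolding Fgam_def by auto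
  obtain a where a: "a \<in> A" "\<forall>i<m. c ! i \<noteq> PInf \<longrightarrow> a ! i = c ! i"
    using clos_exact_approx_finite[OF A_gam_tuples c'(1)] by blast
  have "a ! i \<noteq> PInf" using a(2) i by auto
  then show "i \<in> I" using Fgam_nth_notin[of a m I i] a(1) A_Fgam i(1) by blast
qed

lemma mem_own_face:
  assumes y: "y \<in> clos Z m A"
  shows "Fface Z m {i. i < m \<and> y ! i \<noteq> PInf} A \<in> faces Z m A"
    and "y \<in> Fface Z m {i. i < m \<and> y ! i \<noteq> PInf} A"
proof -
  have "y \<in> gam_tuples m" using clos_gam_tuples[OF A_gam_tuples y] .
  then have "y \<in> Fgam Z m {i. i < m \<and> y ! i \<noteq> PInf}" unfolding gam_tuples_def Fgam_def by auto
  then show yin: "y \<in> Fface Z m {i. i < m \<and> y ! i \<noteq> PInf} A" unfolding Fface_def using y by blast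
  have "{i. i < m \<and> y ! i \<noteq> PInf} \<subseteq> {0..<m}" by auto
  then show "Fface Z m {i. i < m \<and> y ! i \<noteq> PInf} A \<in> faces Z m A"
    unfolding faces_def using yin by blast
qed

lemma finite_faces: "finite (faces Z m A)"
proof (rule finite_subset)
  show "faces Z m A \<subseteq> (\<lambda>K. Fface Z m K A) ` Pow {0..<m}" unfolding faces_def by blast
qed simp

lemma monohedral_faces_total:
  assumes mono: "monohedral Z m A" and x: "x \<in> faces Z m A" and y: "y \<in> faces Z m A"
  shows "x \<subseteq> clos Z m y \<or> y \<subseteq> clos Z m x"
proof -
  define R where "R = {(B, C). B \<in> faces Z m A \<and> C \<in> faces Z m A \<and> B \<subseteq> clos Z m C}"
  have "linear_order_on (faces Z m A) R" using mono unfolding monohedral_def R_def .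
  then have "refl_on (faces Z m A) R" "total_on (faces Z m A) R"
    unfolding linear_order_on_def partial_order_on_def preorder_on_def by auto
  then have "(x, y) \<in> R \<or> (y, x) \<in> R"
    using x y unfolding total_on_def refl_on_def by (cases "x = y") auto
  then show ?thesis unfolding R_def by blast
qed

text \<open>Every point of \<open>\<overline>A \<setminus> A\<close> lies on a face other than \<open>A\<close>, and these faces form a finite
  chain.\<close>

lemma largest_proper_face:
  assumes mono: "monohedral Z m A" and ncl: "\<not> is_closed Z m A"
  obtains K where "K \<subseteq> I" "K \<noteq> I" "Fface Z m K A \<noteq> {}"
    "clos Z m A - A \<subseteq> clos Z m (Fface Z m K A)"
proof -
  define Fs where "Fs = faces Z m A - {A}"
  obtain b0 where b0: "b0 \<in> clos Z m A" "b0 \<notin> A"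
    using ncl subset_clos_gam_tuples[OF A_gam_tuples] unfolding is_closed_def by blast
  have "\<exists>F\<in>Fs. \<forall>G\<in>Fs. G \<subseteq> clos Z m F"
  proof (rule finite_total_has_greatest)
    show "finite Fs" unfolding Fs_def using finite_faces by simp
    show "Fs \<noteq> {}" using mem_own_face[OF b0(1)] b0(2) unfolding Fs_def by blast
    show "\<forall>x\<in>Fs. \<forall>y\<in>Fs. x \<subseteq> clos Z m y \<or> y \<subseteq> clos Z m x"
      using monohedral_faces_total[OF mono] unfolding Fs_def by blast
    show "\<forall>x\<in>Fs. \<forall>y\<in>Fs. \<forall>z\<in>Fs. x \<subseteq> clos Z m y \<longrightarrow> y \<subseteq> clos Z m z \<longrightarrow> x \<subseteq> clos Z m z"
      using subset_clos_trans by blast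
  qed
  then obtain F where F: "F \<in> Fs" "\<forall>G\<in>Fs. G \<subseteq> clos Z m F" by blast
  obtain K where K: "K \<subseteq> {0..<m}" "F = Fface Z m K A" "F \<noteq> {}"
    using F(1) unfolding Fs_def faces_def by blast
  have KI: "K \<subseteq> I" using face_index_subset K(2,3) by blast
  moreover have "K \<noteq> I" using F(1) K(2) face_full unfolding Fs_def by auto
  moreover have "clos Z m A - A \<subseteq> clos Z m F"
  proof
    fix y assume y: "y \<in> clos Z m A - A"
    then have "Fface Z m {i. i < m \<and> y ! i \<noteq> PInf} A \<in> Fs"
      using mem_own_face[of y] unfolding Fs_def by auto
    then show "y \<in> clos Z m F" using F(2) mem_own_face(2)[of y] y by blast
  qed
  ultimately show ?thesis using that K by blast
qed

end

section \<open>Splitting the precell by residues of the coordinate \<open>j\<close>\<close>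

locale residue_split = precell +
  fixes K :: "nat set" and j :: nat and \<mu> \<nu> and \<rho> n :: nat
  assumes KI: "K \<subseteq> I" and face_nonempty: "Fface Z m K A \<noteq> {}"
    and jI: "j \<in> I" and jK: "j \<notin> K" and jmin: "\<forall>i<j. i \<in> I \<longrightarrow> i \<in> K"
    and mu_affine: "affine_on Z {i \<in> I. i < j} (trunc j) \<mu>"
    and nu_affine: "affine_on Z {i \<in> I. i < j} (trunc j) \<nu>"
    and mu_cont: "largely_cont Z j (trunc j) \<mu>" and nu_cont: "largely_cont Z j (trunc j) \<nu>"
    and bounds_nonneg: "\<forall>y\<in>trunc j. Fin 0 \<le> \<mu> y \<and> Fin 0 \<le> \<nu> y"
    and rho_less: "\<rho> < N ! j"
    and trunc_Suc_j: "\<And>a. a \<in> trunc (Suc j) \<longleftrightarrow> (a \<in> Fgam Z (Suc j) {i \<in> I. i < Suc j} \<and>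
        butlast a \<in> trunc j \<and> \<mu> (butlast a) \<le> a ! j \<and> a ! j \<le> \<nu> (butlast a) \<and>
        cong_ext Z (N ! j) (a ! j) (Fin (of_nat \<rho>)))"
    and n_pos: "n \<ge> 1"
begin

definition part where
  "part s = {a \<in> A. cong_ext Z (n * N ! j) (a ! j) (Fin (of_nat (\<rho> + N ! j * s)))}"

lemma j_less_m: "j < m" using jI I_subset by auto

lemma approach_face: "b \<in> Fface Z m K A \<Longrightarrow> approach Z N m I A K b j"
  unfolding approach_def approach_axioms_def Fface_def
  using precell_axioms KI jI jK jmin by blast

lemma part_subset: "part s \<subseteq> A"
  unfolding part_def by blast

text \<open>The upper bound in direction \<open>j\<close> is \<open>+\<infinity>\<close>: otherwise, being affine, it would be finite at
  the truncation of a point \<open>b\<close> of the face, whereas points of \<open>A\<close> with the same truncation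
  have arbitrarily large \<open>j\<close>-th coordinates.\<close>

lemma nu_PInf: "p \<in> trunc j \<Longrightarrow> \<nu> p = PInf"
proof -
  obtain b where b: "b \<in> Fface Z m K A" using face_nonempty by blast
  interpret approach Z N m I A K b j by (rule approach_face[OF b])
  assume p: "p \<in> trunc j"
  show "\<nu> p = PInf"
  proof (rule ccontr)
    assume "\<nu> p \<noteq> PInf"
    then obtain \<alpha>0 \<alpha> where fy: "\<forall>y\<in>trunc j. \<nu> y = Fin (\<alpha>0 + (\<Sum>i\<in>{i \<in> I. i < j}. of_rat (\<alpha> i) * fin_val (y ! i)))"
      using nu_affine p unfolding affine_on_def by blast
    define w0 where "w0 = \<alpha>0 + (\<Sum>i\<in>{i \<in> I. i < j}. of_rat (\<alpha> i) * fin_val (take j b ! i))"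
    have nb: "\<nu> (take j b) = Fin w0" using fy take_b_trunc unfolding w0_def by blast
    have "\<nu> (take j b) \<in> omg Z"
      using largely_cont_omg[OF nu_cont _ take_b_trunc] trunc_gam_tuples[of j] j_less_m by simp
    then have w0d: "w0 \<in> divhull Z" using nb by simp
    obtain a where a: "a \<in> A" "take j a = take j b" "a ! j \<in> ray w0"
      using approach_prefix[OF ray_open[OF w0d] PInf_in_ray] by blast
    have "a ! j \<le> \<nu> (take j a)" using take_Suc_bounds[OF j_less_m a(1) trunc_Suc_j] by blast
    then have "a ! j \<le> Fin w0" using a(2) nb by simp
    moreover have "Fin w0 < a ! j" using a(3) unfolding ray_def by simp
    ultimately show False by simp
  qed
qed

lemma unbounded_fibres_part:
  assumes s: "s < n"
  shows "unbounded_fibres j (\<lambda>v. cong_ext Z (n * N ! j) v (Fin (of_nat (\<rho> + N ! j * s))))"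
  unfolding unbounded_fibres_def
proof (intro ballI)
  fix p c assume p: "p \<in> trunc j" and c: "c \<in> divhull Z"
  obtain a0 where a0: "a0 \<in> trunc (Suc j)" "butlast a0 = p" using trunc_extend[OF j_less_m p] by blast
  have a0F: "a0 \<in> Fgam Z (Suc j) {i \<in> I. i < Suc j}" using trunc_Suc_j a0(1) by blast
  obtain z where z: "z \<in> Z" "a0 ! j = Fin z" using Fgam_nth_in[OF a0F] jI by auto
  have muz: "\<mu> p \<le> Fin z" using trunc_Suc_j a0 z(2) by auto
  define M where "M = n * N ! j"
  have M: "M \<ge> 1" unfolding M_def using n_pos N_pos[OF j_less_m] by (simp add: Suc_le_eq)
  obtain t where t: "t \<in> Z" "max c z < of_nat (\<rho> + N ! j * s) + of_nat M * t"
    using Z_residue_above[OF divhull_max[OF c Z_divhull[OF z(1)]] M] by blast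
  define x where "x = of_nat (\<rho> + N ! j * s) + of_nat M * t"
  have xZ: "x \<in> Z" unfolding x_def using Z_add[OF Z_of_nat Z_of_nat_mult[OF t(1)]] .
  have ly: "length p = j" using trunc_length[of j p] j_less_m p by simp
  have pF: "p \<in> Fgam Z j {i \<in> I. i < j}" using trunc_Fgam[of j] j_less_m p by auto
  have "p @ [Fin x] \<in> Fgam Z (Suc j) {i \<in> I. i < Suc j}"
    by (rule Fgam_snoc[OF pF]) (use xZ jI in auto)
  moreover have "Fin z \<le> Fin x" using t(2) unfolding x_def by simp
  then have "\<mu> p \<le> Fin x" by (rule order_trans[OF muz])
  moreover have "Fin x \<le> \<nu> p" using nu_PInf p by simp
  moreover have "x - of_nat \<rho> = of_nat (N ! j) * (of_nat s + of_nat n * t)"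
    unfolding x_def M_def by (simp add: algebra_simps)
  then have "cong_ext Z (N ! j) (Fin x) (Fin (of_nat \<rho>))"
    using Z_add[OF Z_of_nat Z_of_nat_mult[OF t(1)]] unfolding cong_ext.simps nmult_iff by blast
  ultimately have "p @ [Fin x] \<in> trunc (Suc j)" using trunc_Suc_j p butlast_nth_snoc[OF ly] by simp
  moreover have "x - of_nat (\<rho> + N ! j * s) = of_nat M * t" unfolding x_def by simp
  then have "cong_ext Z (n * N ! j) (Fin x) (Fin (of_nat (\<rho> + N ! j * s)))"
    unfolding cong_ext.simps nmult_iff M_def using t(1) by blast
  moreover have "c < x" using t(2) unfolding x_def by simp
  ultimately show "\<exists>x\<in>Z. c < x \<and> p @ [Fin x] \<in> trunc (Suc j) \<and>
      cong_ext Z (n * N ! j) (Fin x) (Fin (of_nat (\<rho> + N ! j * s)))" using xZ by blast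
qed

lemma face_subset_clos_part:
  assumes s: "s < n"
  shows "Fface Z m K A \<subseteq> clos Z m (part s)"
proof
  fix b assume b: "b \<in> Fface Z m K A"
  interpret approach Z N m I A K b j by (rule approach_face[OF b])
  show "b \<in> clos Z m (part s)"
    using approach_clos[OF unbounded_fibres_part[OF s]] unfolding part_def .
qed

lemma part_nonempty: "s < n \<Longrightarrow> part s \<noteq> {}"
  using face_subset_clos_part[of s] face_nonempty clos_empty by auto

lemma take_part_le:
  assumes s: "s < n" and k: "k \<le> j"
  shows "take k ` part s = trunc k"
proof
  show "take k ` part s \<subseteq> trunc k" using part_subset unfolding trunc_def by blast
  show "trunc k \<subseteq> take k ` part s"
  proof
    fix y assume "y \<in> trunc k"
    then obtain a where a: "a \<in> A" "y = take k a" unfolding trunc_def by blast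
    obtain x where x: "take j a @ [Fin x] \<in> trunc (Suc j)"
        "cong_ext Z (n * N ! j) (Fin x) (Fin (of_nat (\<rho> + N ! j * s)))"
      using unbounded_fibres_part[OF s] take_in_trunc[OF a(1)] Z_divhull[OF Z_zero]
      unfolding unbounded_fibres_def by blast
    obtain a' where a': "a' \<in> A" "take j a @ [Fin x] = take (Suc j) a'" using x(1) unfolding trunc_def by blast
    have lt: "length (take j a) = j" using A_length[OF a(1)] j_less_m by simp
    have "a' ! j = Fin x" using arg_cong[OF a'(2), of "\<lambda>l. l ! j"] butlast_nth_snoc[OF lt] by simp
    then have "a' \<in> part s" unfolding part_def using a'(1) x(2) by simp
    moreover have "take k a' = y"
    proof -
      have "take k a' = take k (take (Suc j) a')" using k by simp
      also have "\<dots> = take k (take j a)" unfolding a'(2)[symmetric] using lt k by simp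
      finally show ?thesis using a(2) k by simp
    qed
    ultimately show "y \<in> take k ` part s" by blast
  qed
qed

lemma take_part_gt:
  assumes k: "j < k"
  shows "take k ` part s = {y \<in> trunc k. cong_ext Z (n * N ! j) (y ! j) (Fin (of_nat (\<rho> + N ! j * s)))}"
proof
  show "take k ` part s \<subseteq> {y \<in> trunc k. cong_ext Z (n * N ! j) (y ! j) (Fin (of_nat (\<rho> + N ! j * s)))}"
    using k part_subset take_in_trunc unfolding part_def by auto
  show "{y \<in> trunc k. cong_ext Z (n * N ! j) (y ! j) (Fin (of_nat (\<rho> + N ! j * s)))} \<subseteq> take k ` part s"
  proof
    fix y assume y: "y \<in> {y \<in> trunc k. cong_ext Z (n * N ! j) (y ! j) (Fin (of_nat (\<rho> + N ! j * s)))}"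
    then obtain a where a: "a \<in> A" "y = take k a" unfolding trunc_def by blast
    then have "a \<in> part s" unfolding part_def using y k by auto
    then show "y \<in> take k ` part s" using a(2) by blast
  qed
qed

lemma level_part_j:
  assumes s: "s < n"
  shows "level (n * N ! j) j {i \<in> I. i < Suc j} (trunc j) (take (Suc j) ` part s)"
proof -
  have "\<rho> + N ! j * s < N ! j + N ! j * s" using rho_less by simp
  also have "\<dots> = Suc s * N ! j" by simp
  also have "\<dots> \<le> n * N ! j" using s by (intro mult_le_mono1) simp
  finally have r: "\<rho> + N ! j * s < n * N ! j" .
  have coarsen: "cong_ext Z (N ! j) v (Fin (of_nat \<rho>))"
    if "cong_ext Z (n * N ! j) v (Fin (of_nat (\<rho> + N ! j * s)))" for v
    using that nmult_coarsen by (cases v) auto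
  have seteq: "take (Suc j) ` part s = {a \<in> Fgam Z (Suc j) {i \<in> I. i < Suc j}. butlast a \<in> trunc j \<and>
      \<mu> (butlast a) \<le> a ! j \<and> a ! j \<le> \<nu> (butlast a) \<and>
      cong_ext Z (n * N ! j) (a ! j) (Fin (of_nat (\<rho> + N ! j * s)))}"
  proof (rule set_eqI)
    fix a
    have "a \<in> take (Suc j) ` part s \<longleftrightarrow> a \<in> trunc (Suc j) \<and>
        cong_ext Z (n * N ! j) (a ! j) (Fin (of_nat (\<rho> + N ! j * s)))"
      unfolding take_part_gt[OF lessI] by blast
    then show "a \<in> take (Suc j) ` part s \<longleftrightarrow> a \<in> {a \<in> Fgam Z (Suc j) {i \<in> I. i < Suc j}.
        butlast a \<in> trunc j \<and> \<mu> (butlast a) \<le> a ! j \<and> a ! j \<le> \<nu> (butlast a) \<and>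
        cong_ext Z (n * N ! j) (a ! j) (Fin (of_nat (\<rho> + N ! j * s)))}"
      using trunc_Suc_j[of a] coarsen[of "a ! j"] by blast
  qed
  have eI: "{i \<in> {i \<in> I. i < Suc j}. i < j} = {i \<in> I. i < j}" by auto
  show ?thesis unfolding level_def seteq eI
    by (intro exI[of _ \<mu>] exI[of _ \<nu>] exI[of _ "\<rho> + N ! j * s"] conjI)
      (use mu_affine nu_affine mu_cont nu_cont bounds_nonneg r in simp_all)
qed

lemma level_part_above:
  assumes k: "j < k" "k < m"
  shows "level (N ! k) k {i \<in> I. i < Suc k} (take k ` part s) (take (Suc k) ` part s)"
proof -
  have "take (Suc k) ` part s = {a \<in> trunc (Suc k). butlast a \<in> take k ` part s}"
  proof (rule set_eqI)
    fix a
    show "a \<in> take (Suc k) ` part s \<longleftrightarrow> a \<in> {a \<in> trunc (Suc k). butlast a \<in> take k ` part s}"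
    proof (cases "a \<in> trunc (Suc k)")
      case True
      have "length a = Suc k" using trunc_length[of "Suc k" a] k True by simp
      then have "butlast a ! j = a ! j" using k by (simp add: nth_butlast)
      moreover have jk: "j < Suc k" using k by simp
      ultimately show ?thesis
        using True butlast_trunc[OF k(2) True] unfolding take_part_gt[OF k(1)] take_part_gt[OF jk] by simp
    next
      case False
      then show ?thesis using part_subset unfolding trunc_def by blast
    qed
  qed
  moreover have "take k ` part s \<subseteq> trunc k" using part_subset unfolding trunc_def by blast
  ultimately show ?thesis using level_restrict[OF level_trunc[OF k(2)]] by simp
qed

lemma lc_precell_part:
  assumes s: "s < n"
  shows "lc_precell Z (N[j := n * N ! j]) (part s)"
proof -
  have "level_at (N[j := n * N ! j]) (part s) k" if k: "k < m" for k
  proof -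
    have "take (Suc k) ` part s \<subseteq> trunc (Suc k)" using part_subset unfolding trunc_def by blast
    then have Fg: "take (Suc k) ` part s \<subseteq> Fgam Z (Suc k) {i \<in> I. i < Suc k}"
      using trunc_Fgam[of "Suc k"] k by auto
    have "level (N[j := n * N ! j] ! k) k {i \<in> I. i < Suc k} (take k ` part s) (take (Suc k) ` part s)"
    proof (cases k j rule: linorder_cases)
      case less
      then show ?thesis using level_trunc[OF k] take_part_le[OF s] by simp
    next
      case equal
      then show ?thesis using level_part_j[OF s] take_part_le[OF s] j_less_m lenN by simp
    next
      case greater
      then show ?thesis using level_part_above[OF greater k] by simp
    qed
    then show ?thesis unfolding level_at_def using Fg by (intro exI[of _ "{i \<in> I. i < Suc k}"]) auto
  qed
  moreover have "\<forall>a\<in>part s. length a = length (N[j := n * N ! j])"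
    using part_subset A_length lenN by auto
  ultimately show ?thesis
    using lc_precell_iff_levelwise part_nonempty[OF s] lenN unfolding levelwise_def by simp
qed

lemma frontier_part:
  assumes s: "s < n" and bd: "clos Z m A - A \<subseteq> clos Z m (Fface Z m K A)"
  shows "frontier_set Z m (part s) = frontier_set Z m A"
proof
  have "clos Z m (part s) - part s \<subseteq> clos Z m A - A"
  proof
    fix x assume x: "x \<in> clos Z m (part s) - part s"
    have "x \<notin> A"
      using x clos_inter_Fgam[of "part s" m I] part_subset A_Fgam by blast
    then show "x \<in> clos Z m A - A" using x clos_mono[OF part_subset] by blast
  qed
  then show "frontier_set Z m (part s) \<subseteq> frontier_set Z m A"
    unfolding frontier_set_def by (rule clos_mono)
  have "Fface Z m K A \<inter> part s = {}"
  proof -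
    have False if "x \<in> Fface Z m K A" "x \<in> part s" for x
    proof -
      have "x \<in> Fgam Z m K" "x \<in> Fgam Z m I" using that part_subset A_Fgam unfolding Fface_def by auto
      then have "K = I" by (rule Fgam_unique)
      then show False using jI jK by simp
    qed
    then show ?thesis by blast
  qed
  then have "Fface Z m K A \<subseteq> clos Z m (part s) - part s" using face_subset_clos_part[OF s] by blast
  then have "clos Z m (Fface Z m K A) \<subseteq> frontier_set Z m (part s)"
    unfolding frontier_set_def by (rule clos_mono)
  moreover have "frontier_set Z m A \<subseteq> clos Z m (Fface Z m K A)"
    unfolding frontier_set_def using clos_mono[OF bd] clos_idem by blast
  ultimately show "frontier_set Z m A \<subseteq> frontier_set Z m (part s)" by blast
qed

lemma nth_j_of_A: "a \<in> A \<Longrightarrow> \<exists>x\<in>Z. a ! j = Fin x"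
  using Fgam_nth_in[of a m I j] A_Fgam jI j_less_m by blast

lemma parts_cover: "(\<Union>s<n. part s) = A"
proof
  show "(\<Union>s<n. part s) \<subseteq> A" using part_subset by blast
  show "A \<subseteq> (\<Union>s<n. part s)"
  proof
    fix a assume a: "a \<in> A"
    obtain x where x: "a ! j = Fin x" using nth_j_of_A[OF a] by blast
    have "x - of_nat \<rho> \<in> nmult Z (N ! j)"
      using take_Suc_bounds[OF j_less_m a trunc_Suc_j] x by simp
    then obtain s where "s < n" "x - of_nat (\<rho> + N ! j * s) \<in> nmult Z (n * N ! j)"
      using residue_refine[OF n_pos] by blast
    then show "a \<in> (\<Union>s<n. part s)" unfolding part_def using a x by auto
  qed
qed

lemma parts_disjoint:
  assumes "s < n" "s' < n" "s \<noteq> s'"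
  shows "part s \<inter> part s' = {}"
proof -
  have "False" if a: "a \<in> part s" "a \<in> part s'" for a
  proof -
    obtain x where x: "a ! j = Fin x" using nth_j_of_A a(1) part_subset by blast
    have "cong_ext Z (n * N ! j) (a ! j) (Fin (of_nat (\<rho> + N ! j * s)))"
      "cong_ext Z (n * N ! j) (a ! j) (Fin (of_nat (\<rho> + N ! j * s')))"
      using a unfolding part_def by blast+
    then have "x - of_nat (\<rho> + N ! j * s) \<in> nmult Z (n * N ! j)"
      "x - of_nat (\<rho> + N ! j * s') \<in> nmult Z (n * N ! j)"
      unfolding x cong_ext.simps .
    then show False using residue_refine_unique[OF N_pos[OF j_less_m] assms(1,2)] assms(3) by blast
  qed
  then show ?thesis by blast
qed


lemma exists_split:
  assumes bd: "clos Z m A - A \<subseteq> clos Z m (Fface Z m K A)"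
  shows "\<exists>N'. length N' = m \<and> (\<forall>k\<in>set N'. k > 0) \<and>
      (\<exists>P.
         (\<Union>i\<in>{1..n}. P i) = A \<and>
         (\<forall>i\<in>{1..n}. \<forall>j\<in>{1..n}. i \<noteq> j \<longrightarrow> P i \<inter> P j = {}) \<and>
         (\<forall>i\<in>{1..n}. P i \<noteq> {} \<and> lc_precell Z N' (P i) \<and>
                      frontier_set Z m (P i) = frontier_set Z m A))"
proof -
  have "length (N[j := n * N ! j]) = m" using lenN by simp
  moreover have "\<forall>k\<in>set (N[j := n * N ! j]). k > 0"
  proof
    fix k assume "k \<in> set (N[j := n * N ! j])"
    then have "k \<in> insert (n * N ! j) (set N)" using set_update_subset_insert[of N j] by blast
    moreover have "n * N ! j > 0" using n_pos N_pos[OF j_less_m] by simp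
    ultimately show "k > 0" using posN by blast
  qed
  moreover have "(\<Union>i\<in>{1..n}. part (i - 1)) = A"
    using parts_cover unfolding image_Suc_lessThan[symmetric] by simp
  moreover have "\<forall>i\<in>{1..n}. \<forall>i'\<in>{1..n}. i \<noteq> i' \<longrightarrow> part (i - 1) \<inter> part (i' - 1) = {}"
    by (intro ballI impI parts_disjoint) auto
  moreover have "\<forall>i\<in>{1..n}. part (i - 1) \<noteq> {} \<and> lc_precell Z (N[j := n * N ! j]) (part (i - 1)) \<and>
      frontier_set Z m (part (i - 1)) = frontier_set Z m A"
    using part_nonempty lc_precell_part frontier_part[OF _ bd] by auto
  ultimately show ?thesis by blast
qed
end

context precell begin

lemma exists_residue_split:
  fixes n :: nat
  assumes mono: "monohedral Z m A" and ncl: "\<not> is_closed Z m A" and n1: "n \<ge> 1"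
  obtains K j \<mu> \<nu> \<rho> where "residue_split Z N m I A K j \<mu> \<nu> \<rho> n"
    and "clos Z m A - A \<subseteq> clos Z m (Fface Z m K A)"
proof -
  obtain K where K: "K \<subseteq> I" "K \<noteq> I" "Fface Z m K A \<noteq> {}"
      and bd: "clos Z m A - A \<subseteq> clos Z m (Fface Z m K A)"
    using largest_proper_face[OF mono ncl] by blast
  obtain j where j: "j \<in> I - K" and jmin: "\<forall>i<j. i \<in> I \<longrightarrow> i \<in> K"
    using least_index_outside[OF K(1,2)] by blast
  have "j < m" using j I_subset by auto
  have eI: "{i \<in> {i \<in> I. i < Suc j}. i < j} = {i \<in> I. i < j}" by auto
  obtain \<mu> \<nu> \<rho> where "affine_on Z {i \<in> I. i < j} (trunc j) \<mu>"
    and "affine_on Z {i \<in> I. i < j} (trunc j) \<nu>"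
    and "largely_cont Z j (trunc j) \<mu>" and "largely_cont Z j (trunc j) \<nu>"
    and "\<forall>y\<in>trunc j. Fin 0 \<le> \<mu> y \<and> Fin 0 \<le> \<nu> y" and "\<rho> < N ! j"
    and layer: "trunc (Suc j) = {a \<in> Fgam Z (Suc j) {i \<in> I. i < Suc j}. butlast a \<in> trunc j \<and>
                 \<mu> (butlast a) \<le> a ! j \<and> a ! j \<le> \<nu> (butlast a) \<and>
                 cong_ext Z (N ! j) (a ! j) (Fin (of_nat \<rho>))}"
    using level_trunc[OF \<open>j < m\<close>] unfolding level_def eI by blast
  then have "residue_split Z N m I A K j \<mu> \<nu> \<rho> n"
    unfolding residue_split_def residue_split_axioms_def
    using precell_axioms K(1,3) j jmin n1 by (simp add: layer)
  then show thesis using that bd by blast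
qed

lemma residue_split_exists:
  fixes n :: nat
  assumes "monohedral Z m A" and "\<not> is_closed Z m A" and "n \<ge> 1"
  shows "\<exists>N'. length N' = m \<and> (\<forall>k\<in>set N'. k > 0) \<and>
      (\<exists>P.
         (\<Union>i\<in>{1..n}. P i) = A \<and>
         (\<forall>i\<in>{1..n}. \<forall>j\<in>{1..n}. i \<noteq> j \<longrightarrow> P i \<inter> P j = {}) \<and>
         (\<forall>i\<in>{1..n}. P i \<noteq> {} \<and> lc_precell Z N' (P i) \<and>
                      frontier_set Z m (P i) = frontier_set Z m A))"
proof -
  obtain K j \<mu> \<nu> \<rho> where "residue_split Z N m I A K j \<mu> \<nu> \<rho> n"
    and "clos Z m A - A \<subseteq> clos Z m (Fface Z m K A)"
    using exists_residue_split[OF assms] by blast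
  then show ?thesis by (rule residue_split.exists_split)
qed

end

theorem proposition5p5:
  fixes Z :: "'k::linordered_field set"
    and N :: "nat list" and m :: nat and I :: "nat set"
    and A :: "'k ext list set"
  assumes "Zgroup Z"
    and "length N = m" and "\<forall>k\<in>set N. k > 0"
    and "I \<subseteq> {0..<m}" and "A \<subseteq> Fgam Z m I"
    and "lc_precell Z N A"
    and "monohedral Z m A"
    and "\<not> is_closed Z m A"
  shows "\<forall>n::nat. n \<ge> 1 \<longrightarrow>
    (\<exists>N'. length N' = m \<and> (\<forall>k\<in>set N'. k > 0) \<and>
      (\<exists>P :: nat \<Rightarrow> 'k ext list set.
         (\<Union>i\<in>{1..n}. P i) = A \<and>
         (\<forall>i\<in>{1..n}. \<forall>j\<in>{1..n}. i \<noteq> j \<longrightarrow> P i \<inter> P j = {}) \<and>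
         (\<forall>i\<in>{1..n}. P i \<noteq> {} \<and> lc_precell Z N' (P i) \<and>
                      frontier_set Z m (P i) = frontier_set Z m A)))"
proof -
  have zg: "z_group Z" by (rule z_group.intro) (rule assms(1))
  have "\<forall>a\<in>A. length a = length N" using assms(2,5) unfolding Fgam_def by auto
  then have "z_group.levelwise Z N A" using z_group.lc_precell_iff_levelwise[OF zg] assms(6) by simp
  then have "precell Z N m I A" using zg assms(2-5) by (intro precell.intro precell_axioms.intro)
  then show ?thesis by (intro allI impI precell.residue_split_exists[OF _ assms(7,8)])
qed

end
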